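(* Let $\phi$ be an orientation-preserving isometry of a spin, closed, hyperbolic $4$-manifold $M=\Gamma\backslash H^4$, and let $\hat\phi$ be a lift of $\phi$ to a symmetry of a spin structure $\hat\Gamma\backslash\mathrm{SU}(1,1;\mathbb H)$ on $M$. Let $f\in\mathrm{SO}^+(4,1)$ be such that $\phi=f_\star$, and let $\hat f\in\mathrm{SU}(1,1;\mathbb H)$ be the lift of $f$ such that $\hat\phi=\hat f_\star$. Let $P$ be an isolated fixed point of $\phi$, and let $x\in H^4$ with $\Gamma x=P$. Let $g\in\mathrm{SO}^+(4,1)$ with $ge_5=x$, and let $\hat g\in\mathrm{SU}(1,1;\mathbb H)$ be a lift of $g$. Let $\gamma$ be the unique element of $\Gamma$ such that $\gamma fx=x$, and let $\hat\gamma$ be the unique element of $\hat\Gamma$ lifting $\gamma$. Then $\hat g^{-1}\hat\gamma\hat f\hat g=\mathrm{diag}(p,q)$ with $p$ and $q$ unit quaternions, and $$\nu(\hat\phi,P)=\frac{1}{2(\mathrm{Re}(p)-\mathrm{Re}(q))}.$$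
   Context: $\mathrm{SU}(1,1;\mathbb H)=\{A\in\mathbb H(2):A^*JA=J\}$, $J=\mathrm{diag}(1,-1)$, acts on $B^4=\{q\in\mathbb H:|q|<1\}$ by $\begin{pmatrix}a&b\\c&d\end{pmatrix}\cdot q=(aq+b)(cq+d)^{-1}$. Identify $q_0+q_1\mathbf i+q_2\mathbf j+q_3\mathbf k$ with $(q_0,\dots,q_3)\in\mathbb R^4$, let $H^4=\{x\in\mathbb R^5: x_1^2+\dots+x_4^2-x_5^2=-1,\ x_5>0\}$ and $\zeta:B^4\to H^4$, $\zeta(y)=(2y/(1-|y|^2),(1+|y|^2)/(1-|y|^2))$. The double covering epimorphism $\eta:\mathrm{SU}(1,1;\mathbb H)\to\mathrm{SO}^+(4,1)$ (representing $\mathrm{Spin}^+(4,1)$) is characterized by $\zeta(A\cdot y)=\eta(A)\zeta(y)$. $\Gamma\subset\mathrm{SO}^+(4,1)$ is discrete and torsion-free with $M$ closed, and $\hat\Gamma\subset\mathrm{SU}(1,1;\mathbb H)$ maps isomorphically onto $\Gamma$ under $\eta$. Isometries $f_\star(\Gamma x)=\Gamma fx$ ($f$ normalizing $\Gamma$) and symmetries $\hat f_\star(\hat\Gamma\hat h)=\hat\Gamma\hat f\hat h$ ($\hat f$ normalizing $\hat\Gamma$). $\mathrm{Spin}(4)=\eta^{-1}(\mathrm{Stab}(e_5))=\{\mathrm{diag}(p,q):|p|=|q|=1\}$, with half-spin representations (Atiyah–Bott convention) $\Delta_4^+(\mathrm{diag}(p,q))=\Psi_1(p)$, $\Delta_4^-(\mathrm{diag}(p,q))=\Psi_1(q)$,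 where $\Psi_1(a+b\mathbf j)=\begin{pmatrix}a&b\\-\overline b&\overline a\end{pmatrix}$ for $a,b\in\mathbb C$. For an isolated fixed point $P=\Gamma ge_5$ of $\phi=\hat f_\star$-projection, there is a unique $s\in\mathrm{Spin}(4)$ with $\hat\Gamma\hat f\hat g=\hat\Gamma\hat gs$, and the local contribution of $P$ to the Atiyah–Singer $G$-spin formula is $\nu(\hat\phi,P)=\dfrac{\mathrm{tr}\,\Delta_4^+(s)-\mathrm{tr}\,\Delta_4^-(s)}{|\det(I-d\phi_P)|}$, with $d\phi_P$ the differential of $\phi$ at $P$. *)

theory Defs
  imports "HOL-Analysis.Analysis"
begin

datatype quat = Quat (qre: real) (qi: real) (qj: real) (qk: real)

lemma quat_eqI: "qre a = qre b \<Longrightarrow> qi a = qi b \<Longrightarrow> qj a = qj b \<Longrightarrow> qk a = qk b \<Longrightarrow> a = b"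
  by (cases a; cases b) auto

instantiation quat :: "{ring_1, inverse}"
begin
definition "0 = Quat 0 0 0 0"
definition "1 = Quat 1 0 0 0"
definition "a + b = Quat (qre a + qre b) (qi a + qi b) (qj a + qj b) (qk a + qk b)"
definition "- a = Quat (- qre a) (- qi a) (- qj a) (- qk a)"
definition "a - b = Quat (qre a - qre b) (qi a - qi b) (qj a - qj b) (qk a - qk b)"
definition "a * b = Quat
   (qre a * qre b - qi a * qi b - qj a * qj b - qk a * qk b)
   (qre a * qi b + qi a * qre b + qj a * qk b - qk a * qj b)
   (qre a * qj b - qi a * qk b + qj a * qre b + qk a * qi b)
   (qre a * qk b + qi a * qj b - qj a * qi b + qk a * qre b)"
definition "inverse a = (let n = (qre a)\<^sup>2 + (qi a)\<^sup>2 + (qj a)\<^sup>2 + (qk a)\<^sup>2 in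
   Quat (qre a / n) (- qi a / n) (- qj a / n) (- qk a / n))"
definition "divide a b = a * inverse (b :: quat)"
instance
  by standard (auto intro!: quat_eqI simp: zero_quat_def one_quat_def plus_quat_def
      uminus_quat_def minus_quat_def times_quat_def algebra_simps)
end

lemma quat_simps [simp]:
  "qre 0 = 0" "qi 0 = 0" "qj 0 = 0" "qk 0 = 0"
  "qre 1 = 1" "qi 1 = 0" "qj 1 = 0" "qk 1 = 0"
  "qre (a + b) = qre a + qre b" "qi (a + b) = qi a + qi b"
  "qj (a + b) = qj a + qj b" "qk (a + b) = qk a + qk b"
  by (simp_all add: zero_quat_def one_quat_def plus_quat_def)

definition qcnj :: "quat \<Rightarrow> quat" where
  "qcnj a = Quat (qre a) (- qi a) (- qj a) (- qk a)"

definition qnorm :: "quat \<Rightarrow> real" where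
  "qnorm a = sqrt ((qre a)\<^sup>2 + (qi a)\<^sup>2 + (qj a)\<^sup>2 + (qk a)\<^sup>2)"

definition q2v :: "quat \<Rightarrow> real^4" where
  "q2v a = vector [qre a, qi a, qj a, qk a]"

definition v2q :: "real^4 \<Rightarrow> quat" where
  "v2q v = Quat (v$1) (v$2) (v$3) (v$4)"

type_synonym qmat = "quat^2^2"

definition qmat :: "quat \<Rightarrow> quat \<Rightarrow> quat \<Rightarrow> quat \<Rightarrow> qmat" where
  "qmat a b c d = vector [vector [a, b], vector [c, d]]"

definition qadj :: "qmat \<Rightarrow> qmat" where
  "qadj A = (\<chi> i j. qcnj (A$j$i))"

definition Jq :: qmat where "Jq = qmat 1 0 0 (-1)"

definition SU11H :: "qmat set" where
  "SU11H = {A. qadj A ** Jq ** A = Jq}"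

definition B4 :: "quat set" where "B4 = {q. qnorm q < 1}"

definition moebius :: "qmat \<Rightarrow> quat \<Rightarrow> quat" where
  "moebius A q = (A$1$1 * q + A$1$2) * inverse (A$2$1 * q + A$2$2)"

text \<open>Coordinates of R^5 are indexed 1,2,3,4,5 (in the type 5 the numeral 5 denotes the
  remaining fifth index).\<close>

definition Qform :: "real^5^5" where
  "Qform = (\<chi> i j. if i = j then (if i = 5 then -1 else 1) else 0)"

definition H4 :: "(real^5) set" where
  "H4 = {x. (x$1)\<^sup>2 + (x$2)\<^sup>2 + (x$3)\<^sup>2 + (x$4)\<^sup>2 - (x$5)\<^sup>2 = -1 \<and> x$5 > 0}"

definition e5 :: "real^5" where "e5 = axis 5 1"

definition SO41p :: "(real^5^5) set" where
  "SO41p = {M. transpose M ** Qform ** M = Qform \<and> det M = 1 \<and> M$5$5 > 0}"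

definition zeta :: "quat \<Rightarrow> real^5" where
  "zeta y = (let n = (qnorm y)\<^sup>2 in
     vector [2 * qre y / (1 - n), 2 * qi y / (1 - n), 2 * qj y / (1 - n), 2 * qk y / (1 - n),
             (1 + n) / (1 - n)])"

definition zeta_inv :: "real^5 \<Rightarrow> quat" where
  "zeta_inv x = Quat (x$1 / (1 + x$5)) (x$2 / (1 + x$5)) (x$3 / (1 + x$5)) (x$4 / (1 + x$5))"

definition eta :: "qmat \<Rightarrow> real^5^5" where
  "eta A = (THE M. M \<in> SO41p \<and> (\<forall>y\<in>B4. zeta (moebius A y) = M *v zeta y))"

definition is_subgroup_mat :: "('a::semiring_1^'n^'n) set \<Rightarrow> bool" where
  "is_subgroup_mat G \<longleftrightarrow> mat 1 \<in> G \<and> (\<forall>a\<in>G. \<forall>b\<in>G. a ** b \<in> G)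
      \<and> (\<forall>a\<in>G. invertible a \<and> matrix_inv a \<in> G)"

definition discrete_set :: "(real^5^5) set \<Rightarrow> bool" where
  "discrete_set G \<longleftrightarrow> (\<forall>a\<in>G. \<exists>e>0. \<forall>b\<in>G. b \<noteq> a \<longrightarrow> e \<le> dist a b)"

definition torsion_free :: "(real^5^5) set \<Rightarrow> bool" where
  "torsion_free G \<longleftrightarrow> (\<forall>a\<in>G. \<forall>n>0. ((\<lambda>m. a ** m) ^^ n) (mat 1) = mat 1 \<longrightarrow> a = mat 1)"

text \<open>M = Gamma\H^4 is closed (compact): there is a compact fundamental set.\<close>
definition cocompact :: "(real^5^5) set \<Rightarrow> bool" where
  "cocompact G \<longleftrightarrow> (\<exists>K. compact K \<and> K \<subseteq> H4 \<and> (\<forall>x\<in>H4. \<exists>a\<in>G. a *v x \<in> K))"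

definition orb :: "(real^5^5) set \<Rightarrow> real^5 \<Rightarrow> (real^5) set" where
  "orb G x = (\<lambda>a. a *v x) ` G"

text \<open>Gamma x is an isolated fixed point of f_star (quotient topology via the open projection).\<close>
definition isolated_fixed_point :: "(real^5^5) set \<Rightarrow> real^5^5 \<Rightarrow> real^5 \<Rightarrow> bool" where
  "isolated_fixed_point G f x \<longleftrightarrow> orb G (f *v x) = orb G x \<and>
     (\<exists>e>0. \<forall>y\<in>H4. dist y x < e \<and> orb G (f *v y) = orb G y \<longrightarrow> orb G y = orb G x)"

definition Spin4 :: "qmat set" where
  "Spin4 = {qmat p 0 0 q | p q. qnorm p = 1 \<and> qnorm q = 1}"

definition Psi1 :: "quat \<Rightarrow> complex^2^2" where
  "Psi1 h = (let a = Complex (qre h) (qi h); b = Complex (qj h) (qk h) in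
     vector [vector [a, b], vector [- cnj b, cnj a]])"

definition Delta_plus :: "qmat \<Rightarrow> complex^2^2" where "Delta_plus s = Psi1 (s$1$1)"
definition Delta_minus :: "qmat \<Rightarrow> complex^2^2" where "Delta_minus s = Psi1 (s$2$2)"

definition rcoset_q :: "qmat set \<Rightarrow> qmat \<Rightarrow> qmat set" where
  "rcoset_q G h = (\<lambda>a. a ** h) ` G"

text \<open>|det(I - d phi_P)|, computed in the chart y \<mapsto> Gamma (g zeta(y)) of M around P = Gamma g e5
  (the covering H^4 \<rightarrow> M is a local diffeomorphism); near y = 0 the local representative of
  phi = f_star is y \<mapsto> zeta^-1(g^-1 gamma f g zeta(y)), where gamma is the unique element of
  Gamma with gamma f x = x.\<close>
definition abs_det_I_minus_dphi :: "(real^5^5) set \<Rightarrow> real^5^5 \<Rightarrow> real^5^5 \<Rightarrow> real" where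
  "abs_det_I_minus_dphi G f g =
     (let x = g *v e5; c = (THE c. c \<in> G \<and> c *v (f *v x) = x);
          F = (\<lambda>v::real^4. q2v (zeta_inv (matrix_inv g *v (c *v (f *v (g *v zeta (v2q v)))))));
          D = frechet_derivative F (at 0)
      in \<bar>det (matrix (\<lambda>v. v - D v))\<bar>)"

text \<open>nu(hat phi, P) for phi = f_star, hat phi = hat f_star, P = Gamma g e5, with s the unique
  element of Spin(4) with hat Gamma hat f hat g = hat Gamma hat g s.\<close>
definition nu :: "qmat set \<Rightarrow> (real^5^5) set \<Rightarrow> real^5^5 \<Rightarrow> qmat \<Rightarrow> real^5^5 \<Rightarrow> qmat \<Rightarrow> complex" where
  "nu Gh G f fh g gh =
     (let s = (THE s. s \<in> Spin4 \<and> rcoset_q Gh (fh ** gh) = rcoset_q Gh (gh ** s)) in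
       (trace (Delta_plus s) - trace (Delta_minus s)) / complex_of_real (abs_det_I_minus_dphi G f g))"

end

theory Submission
  imports Defs
begin

(* Making the covering explicit: eta(A) is the matrix of x \<mapsto> A X A^*, where X is the
  quaternionic hermitian matrix attached to x in R^5, and zeta (A \<cdot> y) = eta(A) zeta(y).
  Hence eta is a homomorphism into SO+(4,1), and A = hat g^-1 hat gamma hat f hat g, whose image
  g^-1 gamma f g fixes e5 = zeta 0, fixes the origin of B^4; this forces A = diag(p, q) with
  |p| = |q| = 1.  Since Gamma is discrete and torsion free, stabilisers of points of H^4 in
  Gamma are trivial, so gamma is unique and A is the element s of Spin(4) in the definition
  of nu.  In the chart y \<mapsto> Gamma g zeta(y) the map phi reads y \<mapsto> p y q^-1, and
  det (I - (v \<mapsto> p v q^-1)) = 4 (Re p - Re q)^2, while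
  tr Psi1(p) - tr Psi1(q) = 2 (Re p - Re q). *)

lemma exhaust_5:
  fixes x :: 5
  shows "x = 1 \<or> x = 2 \<or> x = 3 \<or> x = 4 \<or> x = 5"
proof (induct x)
  case (of_int z)
  then have "z = 0 \<or> z = 1 \<or> z = 2 \<or> z = 3 \<or> z = 4" by fastforce
  then show ?case by auto
qed

lemma forall_5: "(\<forall>i::5. P i) \<longleftrightarrow> P 1 \<and> P 2 \<and> P 3 \<and> P 4 \<and> P 5"
  by (metis exhaust_5)

lemma UNIV_5: "UNIV = {1, 2, 3, 4, 5::5}"
  using exhaust_5 by auto

lemma sum_5: "sum f (UNIV::5 set) = f 1 + f 2 + f 3 + f 4 + f 5"
  unfolding UNIV_5 by (simp add: ac_simps)

lemma vector_4 [simp]: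
  "(vector [x1, x2, x3, x4] :: ('a::zero)^4) $ 1 = x1"
  "(vector [x1, x2, x3, x4] :: ('a::zero)^4) $ 2 = x2"
  "(vector [x1, x2, x3, x4] :: ('a::zero)^4) $ 3 = x3"
  "(vector [x1, x2, x3, x4] :: ('a::zero)^4) $ 4 = x4"
  unfolding vector_def by simp_all

lemma vector_5 [simp]:
  "(vector [x1, x2, x3, x4, x5] :: ('a::zero)^5) $ 1 = x1"
  "(vector [x1, x2, x3, x4, x5] :: ('a::zero)^5) $ 2 = x2"
  "(vector [x1, x2, x3, x4, x5] :: ('a::zero)^5) $ 3 = x3"
  "(vector [x1, x2, x3, x4, x5] :: ('a::zero)^5) $ 4 = x4"
  "(vector [x1, x2, x3, x4, x5] :: ('a::zero)^5) $ 5 = x5"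
  unfolding vector_def by simp_all

lemma det_4:
  "det (A::'a::comm_ring_1^4^4) =
    A$1$1 * A$2$2 * A$3$3 * A$4$4 - A$1$1 * A$2$2 * A$3$4 * A$4$3
  - A$1$1 * A$2$3 * A$3$2 * A$4$4 + A$1$1 * A$2$3 * A$3$4 * A$4$2
  + A$1$1 * A$2$4 * A$3$2 * A$4$3 - A$1$1 * A$2$4 * A$3$3 * A$4$2
  - A$1$2 * A$2$1 * A$3$3 * A$4$4 + A$1$2 * A$2$1 * A$3$4 * A$4$3
  + A$1$2 * A$2$3 * A$3$1 * A$4$4 - A$1$2 * A$2$3 * A$3$4 * A$4$1
  - A$1$2 * A$2$4 * A$3$1 * A$4$3 + A$1$2 * A$2$4 * A$3$3 * A$4$1
  + A$1$3 * A$2$1 * A$3$2 * A$4$4 - A$1$3 * A$2$1 * A$3$4 * A$4$2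
  - A$1$3 * A$2$2 * A$3$1 * A$4$4 + A$1$3 * A$2$2 * A$3$4 * A$4$1
  + A$1$3 * A$2$4 * A$3$1 * A$4$2 - A$1$3 * A$2$4 * A$3$2 * A$4$1
  - A$1$4 * A$2$1 * A$3$2 * A$4$3 + A$1$4 * A$2$1 * A$3$3 * A$4$2
  + A$1$4 * A$2$2 * A$3$1 * A$4$3 - A$1$4 * A$2$2 * A$3$3 * A$4$1
  - A$1$4 * A$2$3 * A$3$1 * A$4$2 + A$1$4 * A$2$3 * A$3$2 * A$4$1"
proof -
  have f1: "finite {2::4, 3, 4}" "1 \<notin> {2::4, 3, 4}"
    and f2: "finite {3::4, 4}" "2 \<notin> {3::4, 4}"
    and f3: "finite {4::4}" "3 \<notin> {4::4}"
    by auto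
  show ?thesis
    unfolding det_def UNIV_4 sum_over_permutations_insert[OF f1]
      sum_over_permutations_insert[OF f2] sum_over_permutations_insert[OF f3] permutes_sing
    by (simp add: sign_swap_id permutation_swap_id sign_compose permutation_compose sign_id
        swap_id_eq algebra_simps)
qed

lemma matrix_vector_mult_axis_nth: "(M *v axis j 1) $ i = (M :: real^'n^'m) $ i $ j"
  by (simp add: matrix_vector_mult_basis column_def)

lemma inner_axis_matrix_vector_mult: "axis i 1 \<bullet> ((S::real^'n^'n) *v axis j 1) = S $ i $ j"
  by (simp add: inner_commute[of "axis i 1"] cart_eq_inner_axis[symmetric]
      matrix_vector_mult_axis_nth)

lemma quadratic_form_expand:
  "((a::real) *\<^sub>R u + b *\<^sub>R v) \<bullet> ((S::real^'n^'n) *v (a *\<^sub>R u + b *\<^sub>R v)) =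
     a\<^sup>2 * (u \<bullet> (S *v u)) + a * b * (u \<bullet> (S *v v) + v \<bullet> (S *v u)) + b\<^sup>2 * (v \<bullet> (S *v v))"
  by (simp add: matrix_vector_right_distrib matrix_vector_mult_scaleR inner_add_left
      inner_add_right algebra_simps power2_eq_square)

lemma matrix_diff_ldistrib: "(A::'a::ring_1^'n^'m) ** (B - C) = A ** B - A ** C"
  by (simp add: vec_eq_iff matrix_matrix_mult_def sum_subtractf algebra_simps)

lemma transpose_diff: "transpose (X - Y) = transpose X - transpose (Y::'a::ab_group_add^'n^'m)"
  by (simp add: vec_eq_iff transpose_def)

lemma matrix_inv_right_left:
  fixes A :: "'a::semiring_1^'n^'n"
  assumes "invertible A"
  shows "A ** matrix_inv A = mat 1" "matrix_inv A ** A = mat 1"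
  using assms someI_ex[of "\<lambda>X. A ** X = mat 1 \<and> X ** A = mat 1"]
  unfolding invertible_def matrix_inv_def by auto

lemma matrix_inv_unique:
  fixes A B :: "'a::semiring_1^'n^'n"
  assumes "A ** B = mat 1" "B ** A = mat 1"
  shows "matrix_inv A = B"
proof -
  have "invertible A"
    using assms unfolding invertible_def by blast
  have "matrix_inv A = (matrix_inv A ** A) ** B"
    using assms(1) by (simp flip: matrix_mul_assoc)
  then show ?thesis
    by (simp add: matrix_inv_right_left \<open>invertible A\<close>)
qed

lemma tendsto_matrix_mult [tendsto_intros]:
  fixes X :: "'a \<Rightarrow> real^'n^'m" and Y :: "'a \<Rightarrow> real^'p^'n"
  assumes "(X \<longlongrightarrow> A) F" "(Y \<longlongrightarrow> B) F"
  shows "((\<lambda>x. X x ** Y x) \<longlongrightarrow> A ** B) F"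
  unfolding matrix_matrix_mult_def
  by (intro tendsto_vec_lambda tendsto_sum tendsto_mult tendsto_vec_nth assms)

lemma bounded_of_entries_le:
  assumes "\<And>M i j. M \<in> S \<Longrightarrow> \<bar>M $ i $ j\<bar> \<le> B"
  shows "bounded (S :: (real^'n^'m) set)"
  unfolding bounded_iff
proof (intro exI ballI)
  fix M
  assume M: "M \<in> S"
  have "norm M \<le> (\<Sum>i\<in>UNIV. norm (M $ i))"
    by (simp add: norm_vec_def L2_set_le_sum)
  also have "\<dots> \<le> (\<Sum>i\<in>(UNIV::'m set). \<Sum>j\<in>(UNIV::'n set). B)"
    by (intro sum_mono order_trans[OF norm_le_l1_cart]) (simp add: assms M)
  finally show "norm M \<le> real CARD('m) * (real CARD('n) * B)"
    by simp
qed

definition matpow :: "'a::semiring_1^'n^'n \<Rightarrow> nat \<Rightarrow> 'a^'n^'n" where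
  "matpow A n = ((\<lambda>M. A ** M) ^^ n) (mat 1)"

lemma matpow_0 [simp]: "matpow A 0 = mat 1"
  by (simp add: matpow_def)

lemma matpow_Suc: "matpow A (Suc n) = A ** matpow A n"
  by (simp add: matpow_def)

lemma matpow_add: "matpow A (m + n) = matpow A m ** matpow A n"
  by (induction m) (simp_all add: matpow_Suc matrix_mul_assoc)

lemma matpow_mult_matpow_inverse:
  assumes "A ** B = mat 1"
  shows "matpow A n ** matpow B n = mat 1"
proof (induction n)
  case (Suc n)
  have "matpow A (Suc n) ** matpow B (Suc n) = matpow A n ** (A ** B) ** matpow B n"
    using matpow_add[of A n 1] by (simp add: matpow_Suc matrix_mul_assoc)
  then show ?case
    using Suc assms by simp
qed simp

lemma matpow_conj:
  assumes "Q ** P = mat 1" "P ** Q = mat 1"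
  shows "matpow (Q ** A ** P) n = Q ** matpow A n ** P"
proof (induction n)
  case (Suc n)
  have "Q ** A ** P ** (Q ** matpow A n ** P) = Q ** A ** (P ** Q) ** matpow A n ** P"
    by (simp add: matrix_mul_assoc)
  then show ?case
    using Suc assms(2) by (simp add: matpow_Suc matrix_mul_assoc)
qed (simp add: assms(1))

lemma matpow_returns_to_one:
  fixes A B :: "real^'n^'n"
  assumes AB: "A ** B = mat 1"
    and bounded: "bounded (range (matpow A))" "bounded (range (matpow B))"
  obtains d where "\<And>n. d n > 0" "((\<lambda>n. matpow A (d n)) \<longlongrightarrow> mat 1) sequentially"
proof -
  have "bounded (range (\<lambda>n. (matpow A n, matpow B n)))"
    using bounded_Times[OF bounded] by (rule bounded_subset) auto
  then obtain L r where r: "strict_mono r"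
    and lim: "((\<lambda>n. (matpow A n, matpow B n)) \<circ> r) \<longlonglongrightarrow> L"
    by (rule bounded_imp_convergent_subsequence[elim_format]) blast
  have A_lim: "(\<lambda>n. matpow A (r n)) \<longlonglongrightarrow> fst L" and B_lim: "(\<lambda>n. matpow B (r n)) \<longlonglongrightarrow> snd L"
    using tendsto_fst[OF lim] tendsto_snd[OF lim] by (simp_all add: o_def)
  have "(\<lambda>n. matpow A (r n) ** matpow B (r n)) \<longlonglongrightarrow> fst L ** snd L"
    by (intro tendsto_intros A_lim B_lim)
  then have one: "fst L ** snd L = mat 1"
    by (simp add: matpow_mult_matpow_inverse[OF AB] LIMSEQ_const_iff)
  define d where "d n = r (Suc n) - r n" for n
  have r_Suc: "r (Suc n) = d n + r n" for n
    using strict_monoD[OF r, of n "Suc n"] by (simp add: d_def)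
  have "(\<lambda>n. matpow A (r (Suc n)) ** matpow B (r n)) \<longlonglongrightarrow> mat 1"
    unfolding one[symmetric] by (intro tendsto_intros LIMSEQ_Suc A_lim B_lim)
  moreover have "matpow A (r (Suc n)) ** matpow B (r n) = matpow A (d n)" for n
    unfolding r_Suc matpow_add matrix_mul_assoc[symmetric] matpow_mult_matpow_inverse[OF AB]
    by simp
  ultimately show ?thesis
    using r by (intro that[of d]) (simp_all add: d_def strict_mono_def)
qed

definition qnorm2 :: "quat \<Rightarrow> real" where
  "qnorm2 a = (qre a)\<^sup>2 + (qi a)\<^sup>2 + (qj a)\<^sup>2 + (qk a)\<^sup>2"

definition quat_of_real :: "real \<Rightarrow> quat" where
  "quat_of_real r = Quat r 0 0 0"

lemma quat_component_simps [simp]: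
  "qre (a * b) = qre a * qre b - qi a * qi b - qj a * qj b - qk a * qk b"
  "qi (a * b) = qre a * qi b + qi a * qre b + qj a * qk b - qk a * qj b"
  "qj (a * b) = qre a * qj b - qi a * qk b + qj a * qre b + qk a * qi b"
  "qk (a * b) = qre a * qk b + qi a * qj b - qj a * qi b + qk a * qre b"
  "qre (- a) = - qre a" "qi (- a) = - qi a" "qj (- a) = - qj a" "qk (- a) = - qk a"
  "qre (a - b) = qre a - qre b" "qi (a - b) = qi a - qi b"
  "qj (a - b) = qj a - qj b" "qk (a - b) = qk a - qk b"
  "qre (qcnj a) = qre a" "qi (qcnj a) = - qi a" "qj (qcnj a) = - qj a" "qk (qcnj a) = - qk a"
  "qre (quat_of_real r) = r" "qi (quat_of_real r) = 0"
  "qj (quat_of_real r) = 0" "qk (quat_of_real r) = 0"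
  "qre (inverse a) = qre a / qnorm2 a" "qi (inverse a) = - qi a / qnorm2 a"
  "qj (inverse a) = - qj a / qnorm2 a" "qk (inverse a) = - qk a / qnorm2 a"
  by (simp_all add: times_quat_def uminus_quat_def minus_quat_def qcnj_def quat_of_real_def
      inverse_quat_def qnorm2_def Let_def)

lemma quat_eq_iff: "a = b \<longleftrightarrow> qre a = qre b \<and> qi a = qi b \<and> qj a = qj b \<and> qk a = qk b"
  by (auto intro: quat_eqI)

lemma qnorm2_nonneg: "qnorm2 a \<ge> 0"
  by (simp add: qnorm2_def)

lemma qnorm2_eq_0_iff [simp]: "qnorm2 a = 0 \<longleftrightarrow> a = 0"
  by (auto simp: qnorm2_def quat_eq_iff add_nonneg_eq_0_iff)

lemma qnorm2_pos: "a \<noteq> 0 \<Longrightarrow> qnorm2 a > 0"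
  using qnorm2_nonneg[of a] by (simp add: order_le_less)

instance quat :: division_ring
proof
  fix a b :: quat
  assume "a \<noteq> 0"
  then have "qnorm2 a \<noteq> 0" by simp
  then show "inverse a * a = 1" "a * inverse a = 1"
    by (auto simp: quat_eq_iff field_simps) (simp_all add: qnorm2_def power2_eq_square)
next
  fix a b :: quat
  show "a / b = a * inverse b" by (simp add: divide_quat_def)
  show "inverse (0::quat) = 0" by (simp add: inverse_quat_def zero_quat_def)
qed

lemma quat_of_real_simps [simp]:
  "quat_of_real 0 = 0" "quat_of_real 1 = 1"
  "quat_of_real r = quat_of_real s \<longleftrightarrow> r = s"
  "quat_of_real r = 0 \<longleftrightarrow> r = 0"
  "quat_of_real r = 1 \<longleftrightarrow> r = 1"
  by (simp_all add: quat_eq_iff)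

lemma qcnj_quat_of_real [simp]: "qcnj (quat_of_real r) = quat_of_real r"
  by (simp add: quat_eq_iff)

lemma quat_of_real_mult: "quat_of_real r * quat_of_real s = quat_of_real (r * s)"
  and quat_of_real_diff: "quat_of_real r - quat_of_real s = quat_of_real (r - s)"
  and quat_of_real_eq_minus_1_iff: "quat_of_real r = - 1 \<longleftrightarrow> r = - 1"
  and quat_of_real_commute: "quat_of_real r * a = a * quat_of_real r"
  by (simp_all add: quat_eq_iff)

lemma qcnj_mult: "qcnj (a * b) = qcnj b * qcnj a"
  and qcnj_add: "qcnj (a + b) = qcnj a + qcnj b"
  and qcnj_diff: "qcnj (a - b) = qcnj a - qcnj b"
  and qcnj_minus: "qcnj (- a) = - qcnj a"
  by (simp_all add: quat_eq_iff algebra_simps)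

lemma qcnj_qcnj [simp]: "qcnj (qcnj a) = a"
  and qcnj_0 [simp]: "qcnj 0 = 0"
  and qcnj_1 [simp]: "qcnj 1 = 1"
  and qcnj_eq_0_iff [simp]: "qcnj a = 0 \<longleftrightarrow> a = 0"
  by (auto simp: quat_eq_iff)

lemma mult_qcnj: "a * qcnj a = quat_of_real (qnorm2 a)"
  and qcnj_mult_self: "qcnj a * a = quat_of_real (qnorm2 a)"
  by (simp_all add: quat_eq_iff qnorm2_def power2_eq_square algebra_simps)

lemma qnorm2_mult: "qnorm2 (a * b) = qnorm2 a * qnorm2 b"
  by (simp add: qnorm2_def power2_eq_square algebra_simps)

lemma qnorm2_simps [simp]:
  "qnorm2 0 = 0" "qnorm2 1 = 1" "qnorm2 (- a) = qnorm2 a"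
  "qnorm2 (qcnj a) = qnorm2 a" "qnorm2 (quat_of_real r) = r\<^sup>2"
  by (simp_all add: qnorm2_def)

lemma qnorm2_add: "qnorm2 (a + b) = qnorm2 a + qnorm2 b + 2 * qre (a * qcnj b)"
  by (simp add: qnorm2_def power2_eq_square algebra_simps)

lemma qre_mult_commute: "qre (a * b) = qre (b * a)"
  by simp

lemma inverse_eq_qcnj: "inverse a = quat_of_real (1 / qnorm2 a) * qcnj a"
  by (simp add: quat_eq_iff)

lemma qnorm2_inverse: "qnorm2 (inverse a) = 1 / qnorm2 a"
  by (cases "a = 0") (simp_all add: inverse_eq_qcnj qnorm2_mult power2_eq_square)

lemma unit_inverse_eq_qcnj: "qnorm2 q = 1 \<Longrightarrow> inverse q = qcnj q"
  by (simp add: inverse_eq_qcnj)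

lemma qnorm_eq_sqrt: "qnorm a = sqrt (qnorm2 a)"
  by (simp add: qnorm_def qnorm2_def)

lemma qnorm_eq_1_iff: "qnorm a = 1 \<longleftrightarrow> qnorm2 a = 1"
  by (simp add: qnorm_eq_sqrt)

lemma qnorm_less_1_iff: "qnorm a < 1 \<longleftrightarrow> qnorm2 a < 1"
  by (simp add: qnorm_eq_sqrt)

lemma power2_qnorm: "(qnorm a)\<^sup>2 = qnorm2 a"
  by (simp add: qnorm_eq_sqrt qnorm2_nonneg)

lemma unit_quat_has_sqrt:
  assumes p: "qnorm2 p = 1"
  obtains r where "qnorm2 r = 1" "r * r = p"
proof (cases "p = -1")
  case True
  then show ?thesis
    by (intro that[of "Quat 0 1 0 0"]) (simp_all add: quat_eq_iff qnorm2_def)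
next
  case False
  \<comment> \<open>(1 + p)^2 is a positive real multiple of p, so r is 1 + p normalised.\<close>
  define t where "t = qnorm2 (1 + p)"
  have "1 + p \<noteq> 0" using False by (metis add_eq_0_iff)
  then have t: "t > 0" by (simp add: t_def qnorm2_pos)
  have sq: "(1 + p) * (1 + p) = quat_of_real t * p"
    using p unfolding t_def quat_eq_iff qnorm2_def
    by (simp add: power2_eq_square algebra_simps) algebra
  define r where "r = quat_of_real (1 / sqrt t) * (1 + p)"
  have "r * r = quat_of_real (1 / sqrt t) * quat_of_real (1 / sqrt t) * ((1 + p) * (1 + p))"
    unfolding r_def by (simp add: quat_eq_iff algebra_simps)
  also have "\<dots> = p"
    unfolding sq using t by (simp add: quat_of_real_mult mult.assoc[symmetric])
  finally show ?thesis
    using t by (intro that) (simp_all add: r_def qnorm2_mult t_def[symmetric] power_divide)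
qed

section \<open>SU(1,1;H) and its action on the ball\<close>

lemma qmat_nth [simp]:
  "qmat a b c d $ 1 $ 1 = a" "qmat a b c d $ 1 $ 2 = b"
  "qmat a b c d $ 2 $ 1 = c" "qmat a b c d $ 2 $ 2 = d"
  by (simp_all add: qmat_def)

lemma qmat_cases: "A = qmat (A$1$1) (A$1$2) (A$2$1) (A$2$2)"
  by (simp add: vec_eq_iff forall_2)

lemma qmat_eq_iff: "qmat a b c d = qmat a' b' c' d' \<longleftrightarrow> a = a' \<and> b = b' \<and> c = c' \<and> d = d'"
  by (auto simp: vec_eq_iff forall_2)

lemma qmat_mult: "qmat a b c d ** qmat a' b' c' d' =
    qmat (a * a' + b * c') (a * b' + b * d') (c * a' + d * c') (c * b' + d * d')"
  by (simp add: vec_eq_iff forall_2 matrix_matrix_mult_def sum_2)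

lemma qmat_one: "(mat 1 :: qmat) = qmat 1 0 0 1"
  by (simp add: vec_eq_iff forall_2 mat_def)

lemma qadj_qmat: "qadj (qmat a b c d) = qmat (qcnj a) (qcnj c) (qcnj b) (qcnj d)"
  by (simp add: vec_eq_iff forall_2 qadj_def)

lemma qadj_mult: "qadj (A ** B) = qadj B ** qadj A"
  by (subst (1 2) qmat_cases[of A], subst (1 2) qmat_cases[of B])
    (simp add: qmat_mult qadj_qmat qcnj_add qcnj_mult)

lemma moebius_qmat: "moebius (qmat a b c d) y = (a * y + b) * inverse (c * y + d)"
  by (simp add: moebius_def)

definition su11 :: "quat \<Rightarrow> quat \<Rightarrow> quat \<Rightarrow> quat \<Rightarrow> bool" where
  "su11 a b c d \<longleftrightarrow>
     qnorm2 a - qnorm2 c = 1 \<and> qnorm2 d - qnorm2 b = 1 \<and> qcnj a * b = qcnj c * d"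

lemma qmat_in_SU11H_iff: "qmat a b c d \<in> SU11H \<longleftrightarrow> su11 a b c d"
proof -
  have adj: "qcnj b * a - qcnj d * c = qcnj (qcnj a * b - qcnj c * d)"
    by (simp add: qcnj_diff qcnj_mult)
  have "qmat a b c d \<in> SU11H \<longleftrightarrow>
      qmat (qcnj a * a - qcnj c * c) (qcnj a * b - qcnj c * d)
        (qcnj b * a - qcnj d * c) (qcnj b * b - qcnj d * d) = qmat 1 0 0 (-1)"
    by (simp add: SU11H_def qadj_qmat Jq_def qmat_mult)
  also have "\<dots> \<longleftrightarrow> su11 a b c d"
    unfolding qmat_eq_iff adj qcnj_mult_self quat_of_real_diff su11_def
    by (auto simp: quat_of_real_eq_minus_1_iff)
  finally show ?thesis .
qed

lemma SU11H_iff: "A \<in> SU11H \<longleftrightarrow> su11 (A$1$1) (A$1$2) (A$2$1) (A$2$2)"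
  by (subst qmat_cases) (rule qmat_in_SU11H_iff)

lemma SU11H_cases:
  assumes "A \<in> SU11H"
  obtains a b c d where "A = qmat a b c d" "su11 a b c d"
  using assms qmat_cases SU11H_iff by metis

lemma su11_qnorm2_eq:
  assumes "su11 a b c d"
  shows "qnorm2 a = qnorm2 d" "qnorm2 b = qnorm2 c"
proof -
  have 1: "qnorm2 a = 1 + qnorm2 c" and 2: "qnorm2 d = 1 + qnorm2 b"
    and "qnorm2 (qcnj a * b) = qnorm2 (qcnj c * d)"
    using assms by (simp_all add: su11_def)
  then have "qnorm2 a * qnorm2 b = qnorm2 c * qnorm2 d"
    by (simp add: qnorm2_mult)
  then show "qnorm2 b = qnorm2 c"
    unfolding 1 2 by (simp add: algebra_simps)
  then show "qnorm2 a = qnorm2 d"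
    using 1 2 by simp
qed

lemma su11_nonzero:
  assumes "su11 a b c d"
  shows "a \<noteq> 0" "d \<noteq> 0"
  using assms qnorm2_nonneg[of b] qnorm2_nonneg[of c] by (auto simp: su11_def)

lemma su11_cross:
  assumes "su11 a b c d"
  shows "a * qcnj c = b * qcnj d" "qcnj b * a = qcnj d * c"
proof -
  have ab: "qcnj a * b = qcnj c * d" using assms by (simp add: su11_def)
  show "qcnj b * a = qcnj d * c"
    using arg_cong[OF ab, of qcnj] by (simp only: qcnj_mult qcnj_qcnj)
  have ad: "qnorm2 a = qnorm2 d" by (rule su11_qnorm2_eq[OF assms])
  have "quat_of_real (qnorm2 a) * (b * qcnj d) = a * (qcnj a * b) * qcnj d"
    by (simp add: mult_qcnj mult.assoc[symmetric])
  also have "\<dots> = a * qcnj c * (d * qcnj d)"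
    unfolding ab by (simp add: mult.assoc)
  also have "\<dots> = quat_of_real (qnorm2 a) * (a * qcnj c)"
    unfolding mult_qcnj ad by (rule quat_of_real_commute[symmetric])
  finally show "a * qcnj c = b * qcnj d"
    using su11_nonzero(1)[OF assms] by simp
qed

lemma su11_qre_eq:
  assumes "su11 a b c d"
  shows "qre (a * y * qcnj b) = qre (c * y * qcnj d)"
proof -
  have "qre (a * y * qcnj b) = qre (qcnj b * a * y)"
    by (subst qre_mult_commute) (simp only: mult.assoc)
  also have "\<dots> = qre (qcnj d * c * y)"
    by (simp only: su11_cross(2)[OF assms])
  also have "\<dots> = qre (c * y * qcnj d)"
    by (subst qre_mult_commute) (simp only: mult.assoc)
  finally show ?thesis .
qed

text \<open>SU(1,1;H) preserves the hermitian form |u|^2 - |w|^2 on H^2, here at (u, w) = (y, 1).\<close>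
lemma su11_qnorm2_diff:
  assumes "su11 a b c d"
  shows "qnorm2 (a * y + b) - qnorm2 (c * y + d) = qnorm2 y - 1"
  using su11_qnorm2_eq[OF assms] su11_qre_eq[OF assms, of y] assms
  by (simp add: qnorm2_add qnorm2_mult su11_def algebra_simps)

lemma su11_moebius:
  assumes "su11 a b c d" "qnorm2 y < 1"
  shows "c * y + d \<noteq> 0" "qnorm2 (a * y + b) < qnorm2 (c * y + d)"
    "qnorm2 ((a * y + b) * inverse (c * y + d)) < 1"
proof -
  show lt: "qnorm2 (a * y + b) < qnorm2 (c * y + d)"
    using su11_qnorm2_diff[OF assms(1), of y] assms(2) by linarith
  then show nz: "c * y + d \<noteq> 0"
    using qnorm2_nonneg[of "a * y + b"] by auto
  show "qnorm2 ((a * y + b) * inverse (c * y + d)) < 1"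
    using lt qnorm2_pos[OF nz] by (simp add: qnorm2_mult qnorm2_inverse)
qed

lemma moebius_in_ball: "A \<in> SU11H \<Longrightarrow> qnorm2 y < 1 \<Longrightarrow> qnorm2 (moebius A y) < 1"
  unfolding moebius_def SU11H_iff by (rule su11_moebius(3))

lemma moebius_one: "moebius (mat 1) y = y"
  by (simp add: qmat_one moebius_qmat)

lemma one_in_SU11H: "mat 1 \<in> SU11H"
  by (simp add: qmat_one qmat_in_SU11H_iff su11_def)

lemma SU11H_mult: "A \<in> SU11H \<Longrightarrow> B \<in> SU11H \<Longrightarrow> A ** B \<in> SU11H"
  unfolding SU11H_def by (simp add: qadj_mult matrix_mul_assoc) (metis matrix_mul_assoc)

lemma diag_in_SU11H: "qnorm2 p = 1 \<Longrightarrow> qnorm2 q = 1 \<Longrightarrow> qmat p 0 0 q \<in> SU11H"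
  by (simp add: qmat_in_SU11H_iff su11_def)

lemma su11_upper_triangular: "su11 p 0 c q \<Longrightarrow> c = 0 \<and> qnorm2 p = 1 \<and> qnorm2 q = 1"
  using su11_nonzero(2) by (fastforce simp: su11_def)

lemma moebius_mult:
  assumes "A \<in> SU11H" "B \<in> SU11H" "qnorm2 y < 1"
  shows "moebius (A ** B) y = moebius A (moebius B y)"
proof -
  obtain a b c d where A: "A = qmat a b c d" by (metis qmat_cases)
  obtain a' b' c' d' where B: "B = qmat a' b' c' d'" "su11 a' b' c' d'"
    using assms(2) by (rule SU11H_cases)
  define u where "u = a' * y + b'"
  define w where "w = c' * y + d'"
  have w: "w \<noteq> 0" unfolding w_def by (rule su11_moebius(1)[OF B(2) assms(3)])
  have "moebius A (moebius B y) = (a * (u * inverse w) + b) * inverse (c * (u * inverse w) + d)"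
    by (simp add: A B moebius_qmat u_def w_def)
  also have "\<dots> = ((a * u + b * w) * inverse w) * inverse ((c * u + d * w) * inverse w)"
    using w by (simp add: algebra_simps mult.assoc)
  also have "\<dots> = (a * u + b * w) * inverse (c * u + d * w)"
  proof -
    have "inverse w * inverse (X * inverse w) = inverse X" for X
      using w by (cases "X = 0") (simp_all add: nonzero_inverse_mult_distrib mult.assoc[symmetric])
    then show ?thesis by (simp add: mult.assoc)
  qed
  also have "\<dots> = moebius (A ** B) y"
    by (simp add: A B qmat_mult moebius_qmat u_def w_def algebra_simps)
  finally show ?thesis ..
qed

lemma SU11H_matrix_inv:
  assumes "A \<in> SU11H"
  shows "invertible A" "matrix_inv A \<in> SU11H"
proof -
  obtain a b c d where A: "A = qmat a b c d" and s: "su11 a b c d"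
    using assms by (rule SU11H_cases)
  define B where "B = qmat (qcnj a) (- qcnj c) (- qcnj b) (qcnj d)"
  have n: "qnorm2 a - qnorm2 c = 1" "qnorm2 d - qnorm2 b = 1" "qcnj a * b = qcnj c * d"
    using s by (simp_all add: su11_def)
  note eq = su11_qnorm2_eq[OF s] and cross = su11_cross[OF s]
  have ca: "c * qcnj a = d * qcnj b"
    using arg_cong[OF cross(1), of qcnj] by (simp add: qcnj_mult)
  have "qcnj a * a + - qcnj c * c = 1" "qcnj a * b + - qcnj c * d = 0"
    "- qcnj b * a + qcnj d * c = 0" "- qcnj b * b + qcnj d * d = 1"
    using n eq cross by (simp_all add: qcnj_mult_self quat_of_real_diff)
  then have BA: "B ** A = mat 1"
    by (simp add: A B_def qmat_mult qmat_one qmat_eq_iff)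
  have "a * qcnj a + b * - qcnj b = 1" "a * - qcnj c + b * qcnj d = 0"
    "c * qcnj a + d * - qcnj b = 0" "c * - qcnj c + d * qcnj d = 1"
    using n eq cross ca by (simp_all add: mult_qcnj quat_of_real_diff)
  then have AB: "A ** B = mat 1"
    by (simp add: A B_def qmat_mult qmat_one qmat_eq_iff)
  show "invertible A"
    using AB BA by (auto simp: invertible_def)
  have "B \<in> SU11H"
    using n eq cross by (simp add: B_def qmat_in_SU11H_iff su11_def qcnj_minus)
  then show "matrix_inv A \<in> SU11H"
    using matrix_inv_unique[OF AB BA] by simp
qed

definition boost_mat :: "real \<Rightarrow> quat \<Rightarrow> qmat" where
  "boost_mat m w =
     qmat (quat_of_real m) (quat_of_real m * w) (quat_of_real m * qcnj w) (quat_of_real m)"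

definition boost :: "quat \<Rightarrow> qmat" where
  "boost w = boost_mat (1 / sqrt (1 - qnorm2 w)) w"

lemma boost_mat_mult_self:
  "boost_mat m w ** boost_mat m w =
     qmat (quat_of_real (m\<^sup>2 * (1 + qnorm2 w))) (quat_of_real (2 * m\<^sup>2) * w)
       (quat_of_real (2 * m\<^sup>2) * qcnj w) (quat_of_real (m\<^sup>2 * (1 + qnorm2 w)))"
  unfolding boost_mat_def qmat_mult qmat_eq_iff
  by (simp add: quat_eq_iff qnorm2_def power2_eq_square algebra_simps)

lemma boost_mat_mult_minus:
  "boost_mat m w ** boost_mat m (- w) =
     qmat (quat_of_real (m\<^sup>2 * (1 - qnorm2 w))) 0 0 (quat_of_real (m\<^sup>2 * (1 - qnorm2 w)))"
  unfolding boost_mat_def qmat_mult qmat_eq_iff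
  by (simp add: quat_eq_iff qnorm2_def power2_eq_square algebra_simps)

lemma boost_mult_minus: "qnorm2 w < 1 \<Longrightarrow> boost w ** boost (- w) = mat 1"
  unfolding boost_def by (simp add: boost_mat_mult_minus qmat_one power_divide)

lemma boost_in_SU11H:
  assumes "qnorm2 w < 1"
  shows "boost w \<in> SU11H"
proof -
  define m where "m = 1 / sqrt (1 - qnorm2 w)"
  have "m\<^sup>2 * (1 - qnorm2 w) = 1"
    using assms by (simp add: m_def power_divide)
  moreover have "qcnj (quat_of_real m) * (quat_of_real m * w) =
      qcnj (quat_of_real m * qcnj w) * quat_of_real m"
    by (simp add: quat_eq_iff algebra_simps)
  ultimately show ?thesis
    unfolding boost_def m_def[symmetric] boost_mat_def qmat_in_SU11H_iff su11_def
    by (simp add: qnorm2_mult algebra_simps)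
qed

lemma boost_square_root:
  assumes "qnorm2 w < 1"
  obtains v where "qnorm2 v < 1" "boost v ** boost v = boost w"
proof -
  \<comment> \<open>The hyperbolic half-angle formula.\<close>
  define s where "s = sqrt (1 - qnorm2 w)"
  define l where "l = 1 / (1 + s)"
  define v where "v = quat_of_real l * w"
  have s: "s > 0" "qnorm2 w = (1 - s) * (1 + s)"
    using assms qnorm2_nonneg[of w] by (auto simp: s_def algebra_simps)
  have qv: "qnorm2 v = (1 - s) / (1 + s)"
    using s by (simp add: v_def qnorm2_mult l_def power2_eq_square)
  then have v: "qnorm2 v < 1"
    using s by (simp add: divide_less_eq)
  define m where "m = 1 / sqrt (1 - qnorm2 v)"
  have m2: "m\<^sup>2 = (1 + s) / (2 * s)"
    using v s unfolding m_def qv by (simp add: power_divide field_simps)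
  have diag: "m\<^sup>2 * (1 + qnorm2 v) = 1 / s" and off: "2 * m\<^sup>2 * l = 1 / s"
    unfolding m2 qv l_def using s by (simp_all add: divide_simps)
  have "quat_of_real (2 * m\<^sup>2) * v = quat_of_real (1 / s) * w"
    unfolding v_def mult.assoc[symmetric] quat_of_real_mult off ..
  moreover have "quat_of_real (2 * m\<^sup>2) * qcnj v = quat_of_real (1 / s) * qcnj w"
    unfolding v_def qcnj_mult qcnj_quat_of_real quat_of_real_commute[of l "qcnj w", symmetric]
      mult.assoc[symmetric] quat_of_real_mult off ..
  ultimately have "boost v ** boost v = boost w"
    unfolding boost_def m_def[symmetric] boost_mat_mult_self diag
    by (simp add: boost_mat_def s_def)
  with v show ?thesis by (rule that)
qed

lemma SU11H_cartan_decomposition: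
  assumes A: "A \<in> SU11H"
  obtains w p q where "qnorm2 w < 1" "qnorm2 p = 1" "qnorm2 q = 1" "A = boost w ** qmat p 0 0 q"
proof -
  obtain a b c d where A_eq: "A = qmat a b c d" and s: "su11 a b c d"
    using A by (rule SU11H_cases)
  define w where "w = b * inverse d"
  have w: "qnorm2 w < 1"
    using s su11_qnorm2_eq[OF s] su11_nonzero[OF s] qnorm2_nonneg[of c]
    by (simp add: w_def su11_def qnorm2_mult qnorm2_inverse divide_less_eq qnorm2_pos)
  define K where "K = boost (- w) ** A"
  have K: "K \<in> SU11H"
    unfolding K_def using w by (simp add: SU11H_mult boost_in_SU11H A)
  have "K $ 1 $ 2 = quat_of_real (1 / sqrt (1 - qnorm2 w)) * (b - b * (inverse d * d))"
    by (simp add: K_def boost_def boost_mat_def A_eq qmat_mult w_def algebra_simps mult.assoc)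
  then have K12: "K $ 1 $ 2 = 0"
    using su11_nonzero(2)[OF s] by simp
  then have "su11 (K$1$1) 0 (K$2$1) (K$2$2)"
    using K SU11H_iff by simp
  then have K21: "K$2$1 = 0" and "qnorm2 (K$1$1) = 1" "qnorm2 (K$2$2) = 1"
    using su11_upper_triangular by blast+
  moreover have "A = boost w ** qmat (K$1$1) 0 0 (K$2$2)"
    using K12 K21 qmat_cases[of K] boost_mult_minus[OF w]
    by (metis K_def matrix_mul_assoc matrix_mul_lid)
  ultimately show ?thesis using w that by blast
qed

section \<open>The hyperboloid model\<close>

definition lorentz_form :: "real^5 \<Rightarrow> real" where
  "lorentz_form v = (v$1)\<^sup>2 + (v$2)\<^sup>2 + (v$3)\<^sup>2 + (v$4)\<^sup>2 - (v$5)\<^sup>2"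

lemma H4_iff: "x \<in> H4 \<longleftrightarrow> lorentz_form x = -1 \<and> x $ 5 > 0"
  by (simp add: H4_def lorentz_form_def)

lemma lorentz_form_matrix:
  "v \<bullet> ((transpose M ** Qform ** M) *v v) = lorentz_form (M *v v)"
proof -
  have "v \<bullet> ((transpose M ** Qform ** M) *v v) = (M *v v) \<bullet> (Qform *v (M *v v))"
    by (metis dot_lmul_matrix matrix_vector_mul_assoc vector_transpose_matrix)
  also have "\<dots> = lorentz_form (M *v v)"
    by (simp add: inner_vec_def sum_5 matrix_vector_mult_def Qform_def lorentz_form_def
        power2_eq_square)
  finally show ?thesis .
qed

definition spatial_part :: "real^5 \<Rightarrow> quat" where
  "spatial_part x = Quat (x$1) (x$2) (x$3) (x$4)"

definition vec5 :: "quat \<Rightarrow> real \<Rightarrow> real^5" where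
  "vec5 h t = vector [qre h, qi h, qj h, qk h, t]"

lemma spatial_part_components [simp]:
  "qre (spatial_part x) = x$1" "qi (spatial_part x) = x$2"
  "qj (spatial_part x) = x$3" "qk (spatial_part x) = x$4"
  by (simp_all add: spatial_part_def)

lemma vec5_nth [simp]:
  "vec5 h t $ 1 = qre h" "vec5 h t $ 2 = qi h" "vec5 h t $ 3 = qj h"
  "vec5 h t $ 4 = qk h" "vec5 h t $ 5 = t"
  by (simp_all add: vec5_def)

lemma spatial_part_vec5 [simp]: "spatial_part (vec5 h t) = h"
  by (simp add: quat_eq_iff)

lemma zeta_vec5:
  "zeta y = vec5 (quat_of_real (2 / (1 - qnorm2 y)) * y) ((1 + qnorm2 y) / (1 - qnorm2 y))"
  by (simp add: vec_eq_iff forall_5 zeta_def Let_def power2_qnorm)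

lemma zeta_0: "zeta 0 = e5"
  by (simp add: vec_eq_iff forall_5 zeta_def e5_def axis_def qnorm_def)

lemma zeta_inv_zeta: "qnorm2 y < 1 \<Longrightarrow> zeta_inv (zeta y) = y"
  by (simp add: zeta_vec5 zeta_inv_def quat_eq_iff field_simps)

lemma zeta_in_H4:
  assumes "qnorm2 y < 1"
  shows "zeta y \<in> H4"
proof -
  define k where "k = 1 / (1 - qnorm2 y)"
  have k: "k * (1 - qnorm2 y) = 1" "k > 0"
    using assms by (simp_all add: k_def)
  have zeta: "zeta y = vec5 (quat_of_real (2 * k) * y) ((1 + qnorm2 y) * k)"
    by (simp add: zeta_vec5 k_def)
  have "lorentz_form (zeta y) = - (k * (1 - qnorm2 y))\<^sup>2"
    unfolding zeta lorentz_form_def qnorm2_def by (simp add: power2_eq_square algebra_simps)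
  then show ?thesis
    using k qnorm2_nonneg[of y] by (simp add: H4_iff zeta)
qed

lemma zeta_zeta_inv:
  assumes "x \<in> H4"
  shows "qnorm2 (zeta_inv x) < 1" "zeta (zeta_inv x) = x"
proof -
  have x: "(x$1)\<^sup>2 + (x$2)\<^sup>2 + (x$3)\<^sup>2 + (x$4)\<^sup>2 = (x$5 - 1) * (1 + x$5)" "x$5 > 0"
    using assms by (simp_all add: H4_def algebra_simps power2_eq_square)
  then have n: "qnorm2 (zeta_inv x) = (x$5 - 1) / (1 + x$5)"
    by (simp add: zeta_inv_def qnorm2_def power_divide add_divide_distrib[symmetric]
        power2_eq_square)
  then show "qnorm2 (zeta_inv x) < 1"
    using x(2) by (simp add: divide_less_eq)
  show "zeta (zeta_inv x) = x"
    using x(2) unfolding zeta_vec5 n by (simp add: vec_eq_iff forall_5 zeta_inv_def field_simps)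
qed

lemma axis_point_in_H4:
  assumes "i \<noteq> 5" "t\<^sup>2 + 1 = s\<^sup>2" "s > 0"
  shows "t *\<^sub>R axis i 1 + s *\<^sub>R axis 5 1 \<in> H4"
  using assms exhaust_5[of i] by (auto simp: H4_def axis_def)

lemma axis_pair_point_in_H4:
  assumes "i \<noteq> 5" "j \<noteq> 5" "i \<noteq> j"
  shows "2 *\<^sub>R (axis i 1 + axis j 1) + 3 *\<^sub>R axis 5 1 \<in> H4"
  using assms exhaust_5[of i] exhaust_5[of j] by (auto simp: H4_def axis_def)

lemma matrix_eq_on_H4:
  fixes M N :: "real^5^5"
  assumes eq: "\<And>v. v \<in> H4 \<Longrightarrow> M *v v = N *v v"
  shows "M = N"
proof -
  have e5: "M *v axis 5 1 = N *v axis 5 1"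
    using eq[of "0 *\<^sub>R axis 1 1 + 1 *\<^sub>R axis 5 1"] axis_point_in_H4[of 1 0 1] by simp
  have "M *v axis j 1 = N *v axis j 1" for j
  proof (cases "j = 5")
    case False
    then have "M *v ((4/3) *\<^sub>R axis j 1 + (5/3) *\<^sub>R axis 5 1) =
        N *v ((4/3) *\<^sub>R axis j 1 + (5/3) *\<^sub>R axis 5 1)"
      by (intro eq axis_point_in_H4) (simp_all add: power2_eq_square)
    then show ?thesis
      using e5 by (simp add: matrix_vector_right_distrib matrix_vector_mult_scaleR)
  qed (use e5 in simp)
  then show ?thesis
    by (metis vec_eq_iff matrix_vector_mult_axis_nth)
qed

lemma symmetric_matrix_eq_0_on_H4:
  fixes S :: "real^5^5"
  assumes sym: "transpose S = S" and zero: "\<And>v. v \<in> H4 \<Longrightarrow> v \<bullet> (S *v v) = 0"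
  shows "S = 0"
proof -
  have S_sym: "S$j$i = S$i$j" for i j
    using sym by (simp add: transpose_def vec_eq_iff)
  have S55: "S$5$5 = 0"
    using zero[of "0 *\<^sub>R axis 1 1 + 1 *\<^sub>R axis 5 1"] axis_point_in_H4[of 1 0 1]
    by (simp add: inner_axis_matrix_vector_mult)
  have Si5: "S$i$i = 0 \<and> S$i$5 = 0" if i: "i \<noteq> 5" for i
  proof -
    have "(t/3)\<^sup>2 * 16 * S$i$i + t * (4/3) * (5/3) * (S$i$5 + S$5$i) = 0" if "t\<^sup>2 = 1" for t
      using zero[OF axis_point_in_H4[OF i, of "t * (4/3)" "5/3"]] that S55
      by (simp add: quadratic_form_expand inner_axis_matrix_vector_mult power_mult_distrib
          power2_eq_square)
    from this[of 1] this[of "-1"] show ?thesis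
      using S_sym[of 5 i] by (simp add: power2_eq_square)
  qed
  have Sij: "S$i$j = 0" if "i \<noteq> 5" "j \<noteq> 5" "i \<noteq> j" for i j
    using zero[OF axis_pair_point_in_H4[OF that], unfolded quadratic_form_expand] Si5[of i] Si5[of j] that S55
      S_sym[of i j] S_sym[of 5 i] S_sym[of 5 j]
    by (simp add: matrix_vector_right_distrib inner_add_left inner_add_right
        inner_axis_matrix_vector_mult)
  have "S$i$j = 0" for i j
    using S55 Si5[of i] Si5[of j] Sij[of i j] S_sym[of j 5] by (cases "i = j") auto
  then show ?thesis
    by (simp add: vec_eq_iff)
qed

section \<open>The covering map eta\<close>

text \<open>eta(A) x is read off from A X A^*, where X is the quaternionic hermitian matrix
  [[x5, h], [h^*, x5]] and h is the spatial part of x.\<close>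
definition eta_map :: "qmat \<Rightarrow> real^5 \<Rightarrow> real^5" where
  "eta_map A x = (let a = A$1$1; b = A$1$2; c = A$2$1; d = A$2$2; h = spatial_part x in
     vec5 (quat_of_real (x$5) * (a * qcnj c + b * qcnj d) + a * h * qcnj d + b * qcnj h * qcnj c)
       (x$5 * (qnorm2 a + qnorm2 b) + 2 * qre (a * h * qcnj b)))"

definition eta_matrix :: "qmat \<Rightarrow> real^5^5" where
  "eta_matrix A = matrix (eta_map A)"

lemma linear_eta_map: "linear (eta_map A)"
  by (rule linearI) (simp_all add: vec_eq_iff forall_5 eta_map_def Let_def algebra_simps)

lemma eta_matrix_mult_vec: "eta_matrix A *v x = eta_map A x"
  by (simp add: eta_matrix_def matrix_works linear_eta_map)

lemma scaleR_vec5: "r *\<^sub>R vec5 h t = vec5 (quat_of_real r * h) (r * t)"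
  by (simp add: vec_eq_iff forall_5)

lemma zeta_quotient:
  assumes "qnorm2 u < qnorm2 w"
  shows "zeta (u * inverse w) = (1 / (qnorm2 w - qnorm2 u)) *\<^sub>R
           vec5 (quat_of_real 2 * u * qcnj w) (qnorm2 u + qnorm2 w)"
proof -
  have w: "qnorm2 w > 0"
    using assms qnorm2_nonneg[of u] by linarith
  then have "w \<noteq> 0"
    by auto
  define q where "q = u * inverse w"
  have q: "q = quat_of_real (1 / qnorm2 w) * (u * qcnj w)"
    unfolding q_def inverse_eq_qcnj mult.assoc[symmetric] quat_of_real_commute[of _ u, symmetric] ..
  have nq: "qnorm2 q = qnorm2 u / qnorm2 w"
    by (simp add: q_def qnorm2_mult qnorm2_inverse)
  have "2 / (1 - qnorm2 u / qnorm2 w) * (1 / qnorm2 w) = 1 / (qnorm2 w - qnorm2 u) * 2"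
    "(1 + qnorm2 u / qnorm2 w) / (1 - qnorm2 u / qnorm2 w) =
       1 / (qnorm2 w - qnorm2 u) * (qnorm2 u + qnorm2 w)"
    using assms w \<open>w \<noteq> 0\<close> by (simp_all add: field_simps)
  then show ?thesis
    unfolding q_def[symmetric] zeta_vec5 scaleR_vec5 nq
    by (simp add: q mult.assoc[symmetric] quat_of_real_mult)
qed

lemma zeta_eq_quotient:
  "qnorm2 y < 1 \<Longrightarrow>
     zeta y = (1 / (1 - qnorm2 y)) *\<^sub>R vec5 (quat_of_real 2 * y) (qnorm2 y + 1)"
  using zeta_quotient[of y 1] by simp

lemma eta_map_quotient:
  assumes s: "su11 a b c d"
  shows "eta_map (qmat a b c d) (vec5 (quat_of_real 2 * y) (qnorm2 y + 1)) =
           vec5 (quat_of_real 2 * (a * y + b) * qcnj (c * y + d))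
             (qnorm2 (a * y + b) + qnorm2 (c * y + d))"
proof -
  have bd: "b * qcnj d = a * qcnj c"
    using su11_cross(1)[OF s] by simp
  have "(a * y + b) * qcnj (c * y + d) =
      quat_of_real (qnorm2 y) * (a * qcnj c) + (a * y * qcnj d + b * qcnj y * qcnj c) + b * qcnj d"
    by (simp add: quat_eq_iff qnorm2_def algebra_simps power2_eq_square)
  then have spatial: "quat_of_real (qnorm2 y + 1) * (a * qcnj c + b * qcnj d)
        + a * (quat_of_real 2 * y) * qcnj d + b * qcnj (quat_of_real 2 * y) * qcnj c
      = quat_of_real 2 * (a * y + b) * qcnj (c * y + d)"
    unfolding bd mult.assoc[of "quat_of_real 2"] by (simp add: quat_eq_iff algebra_simps)
  have "qre (a * (quat_of_real 2 * y) * qcnj b) = 2 * qre (a * y * qcnj b)"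
    by (simp add: algebra_simps)
  moreover have "qnorm2 (a * y + b) = qnorm2 a * qnorm2 y + qnorm2 b + 2 * qre (a * y * qcnj b)"
    by (simp add: qnorm2_add qnorm2_mult)
  moreover have "qnorm2 (c * y + d) = qnorm2 b * qnorm2 y + qnorm2 a + 2 * qre (a * y * qcnj b)"
    using su11_qnorm2_eq[OF s] su11_qre_eq[OF s, of y] by (simp add: qnorm2_add qnorm2_mult)
  ultimately have time: "(qnorm2 y + 1) * (qnorm2 a + qnorm2 b) + 2 * qre (a * (quat_of_real 2 * y) * qcnj b)
      = qnorm2 (a * y + b) + qnorm2 (c * y + d)"
    by (simp add: algebra_simps)
  show ?thesis
    using spatial time by (simp add: eta_map_def Let_def spatial_part_vec5)
qed

lemma eta_matrix_zeta:
  assumes A: "A \<in> SU11H" and y: "qnorm2 y < 1"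
  shows "eta_matrix A *v zeta y = zeta (moebius A y)"
proof -
  obtain a b c d where A_eq: "A = qmat a b c d" and s: "su11 a b c d"
    using A by (rule SU11H_cases)
  have "eta_matrix A *v zeta y =
      (1 / (1 - qnorm2 y)) *\<^sub>R eta_map A (vec5 (quat_of_real 2 * y) (qnorm2 y + 1))"
    using y by (simp add: eta_matrix_mult_vec zeta_eq_quotient linear_cmul[OF linear_eta_map])
  also have "\<dots> = zeta (moebius A y)"
    using su11_qnorm2_diff[OF s, of y] su11_moebius(2)[OF s y]
    by (simp add: A_eq eta_map_quotient[OF s] moebius_qmat zeta_quotient mult.assoc)
  finally show ?thesis .
qed

lemma matrix_eq_on_zeta:
  fixes M N :: "real^5^5"
  assumes "\<And>y. qnorm2 y < 1 \<Longrightarrow> M *v zeta y = N *v zeta y"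
  shows "M = N"
  using assms zeta_zeta_inv by (intro matrix_eq_on_H4) metis

lemma eta_matrix_mult:
  assumes "A \<in> SU11H" "B \<in> SU11H"
  shows "eta_matrix (A ** B) = eta_matrix A ** eta_matrix B"
proof (rule matrix_eq_on_zeta)
  fix y :: quat
  assume y: "qnorm2 y < 1"
  have "eta_matrix (A ** B) *v zeta y = zeta (moebius A (moebius B y))"
    using eta_matrix_zeta[OF SU11H_mult[OF assms] y] moebius_mult[OF assms y] by simp
  also have "\<dots> = eta_matrix A *v (eta_matrix B *v zeta y)"
    using eta_matrix_zeta[OF assms(1) moebius_in_ball[OF assms(2) y]]
      eta_matrix_zeta[OF assms(2) y] by simp
  finally show "eta_matrix (A ** B) *v zeta y = (eta_matrix A ** eta_matrix B) *v zeta y"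
    by (simp add: matrix_vector_mul_assoc)
qed

lemma eta_matrix_one: "eta_matrix (mat 1) = mat 1"
  by (rule matrix_eq_on_zeta) (simp add: eta_matrix_zeta[OF one_in_SU11H] moebius_one)

lemma eta_matrix_matrix_inv:
  assumes A: "A \<in> SU11H"
  shows "eta_matrix (matrix_inv A) = matrix_inv (eta_matrix A)"
proof -
  have "A ** matrix_inv A = mat 1" "matrix_inv A ** A = mat 1"
    using matrix_inv_right_left SU11H_matrix_inv(1)[OF A] by auto
  then show ?thesis
    using eta_matrix_mult[OF A SU11H_matrix_inv(2)[OF A]] eta_matrix_mult[OF SU11H_matrix_inv(2)[OF A] A]
    by (intro matrix_inv_unique[symmetric]) (simp_all add: eta_matrix_one)
qed

lemma transpose_Qform: "transpose Qform = Qform"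
  by (simp add: transpose_def Qform_def vec_eq_iff)

lemma det_Qform_nonzero: "det Qform \<noteq> 0"
proof -
  have "Qform ** Qform = mat 1"
    by (simp add: vec_eq_iff forall_5 matrix_matrix_mult_def Qform_def sum_5 mat_def)
  then show ?thesis
    by (metis det_I det_mul mult_zero_left zero_neq_one)
qed

lemma eta_matrix_lorentz:
  assumes A: "A \<in> SU11H"
  shows "transpose (eta_matrix A) ** Qform ** eta_matrix A = Qform"
proof -
  define S where "S = transpose (eta_matrix A) ** Qform ** eta_matrix A - Qform"
  have "transpose S = S"
    by (simp add: S_def transpose_diff matrix_transpose_mul transpose_Qform matrix_mul_assoc)
  moreover have "v \<bullet> (S *v v) = 0" if v: "v \<in> H4" for v
  proof -
    obtain y where y: "qnorm2 y < 1" "v = zeta y"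
      using v zeta_zeta_inv by metis
    have "v \<bullet> (S *v v) = lorentz_form (eta_matrix A *v v) - lorentz_form (mat 1 *v v)"
      unfolding S_def lorentz_form_matrix[symmetric]
      by (simp add: matrix_vector_mult_diff_rdistrib inner_diff_right)
    also have "\<dots> = 0"
      using y zeta_in_H4[OF moebius_in_ball[OF A y(1)]] zeta_in_H4[OF y(1)]
      by (simp add: eta_matrix_zeta[OF A] H4_iff)
    finally show ?thesis .
  qed
  ultimately have "S = 0"
    by (rule symmetric_matrix_eq_0_on_H4)
  then show ?thesis
    by (simp add: S_def)
qed

lemma det_eta_matrix_square:
  assumes "A \<in> SU11H"
  shows "(det (eta_matrix A))\<^sup>2 = 1"
proof -
  have "det (eta_matrix A) * det Qform * det (eta_matrix A) = det Qform"
    using arg_cong[OF eta_matrix_lorentz[OF assms], of det] by (simp add: det_mul)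
  then show ?thesis
    using det_Qform_nonzero by (simp add: power2_eq_square)
qed

text \<open>Both factors of the Cartan decomposition are squares in SU(1,1;H), so
  det (eta A) is a square.\<close>
lemma det_eta_matrix_nonneg:
  assumes A: "A \<in> SU11H"
  shows "det (eta_matrix A) \<ge> 0"
proof -
  obtain w p q where w: "qnorm2 w < 1" and pq: "qnorm2 p = 1" "qnorm2 q = 1"
    and A_eq: "A = boost w ** qmat p 0 0 q"
    using A by (rule SU11H_cartan_decomposition)
  obtain v where v: "qnorm2 v < 1" "boost v ** boost v = boost w"
    using w by (rule boost_square_root)
  obtain p' where p': "qnorm2 p' = 1" "p' * p' = p"
    using pq(1) by (rule unit_quat_has_sqrt)
  obtain q' where q': "qnorm2 q' = 1" "q' * q' = q"
    using pq(2) by (rule unit_quat_has_sqrt)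
  define K where "K = qmat p' 0 0 q'"
  have K: "K \<in> SU11H" "K ** K = qmat p 0 0 q"
    using p' q' by (simp_all add: K_def diag_in_SU11H qmat_mult)
  have "det (eta_matrix A) = (det (eta_matrix (boost v)) * det (eta_matrix K))\<^sup>2"
    using boost_in_SU11H[OF v(1)] K(1) unfolding A_eq v(2)[symmetric] K(2)[symmetric]
    by (simp add: eta_matrix_mult SU11H_mult det_mul power2_eq_square)
  then show ?thesis
    by simp
qed

lemma eta_matrix_55: "eta_matrix A $ 5 $ 5 = qnorm2 (A$1$1) + qnorm2 (A$1$2)"
  by (simp add: eta_matrix_def matrix_def eta_map_def Let_def axis_def spatial_part_def quat_eq_iff)

lemma eta_matrix_in_SO41p:
  assumes A: "A \<in> SU11H"
  shows "eta_matrix A \<in> SO41p"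
proof -
  have "det (eta_matrix A) = 1"
    using det_eta_matrix_square[OF A] det_eta_matrix_nonneg[OF A] by (simp add: power2_eq_1_iff)
  moreover have "eta_matrix A $ 5 $ 5 > 0"
    using A su11_nonzero(1) qnorm2_pos qnorm2_nonneg
    by (simp add: eta_matrix_55 SU11H_iff add_pos_nonneg)
  ultimately show ?thesis
    using eta_matrix_lorentz[OF A] by (simp add: SO41p_def)
qed

lemma eta_eq_eta_matrix:
  assumes A: "A \<in> SU11H"
  shows "eta A = eta_matrix A"
  unfolding eta_def
proof (rule the_equality)
  show "eta_matrix A \<in> SO41p \<and> (\<forall>y\<in>B4. zeta (moebius A y) = eta_matrix A *v zeta y)"
    using eta_matrix_in_SO41p[OF A] eta_matrix_zeta[OF A]
    by (simp add: B4_def qnorm_less_1_iff)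
next
  fix M
  assume "M \<in> SO41p \<and> (\<forall>y\<in>B4. zeta (moebius A y) = M *v zeta y)"
  then show "M = eta_matrix A"
    using eta_matrix_zeta[OF A]
    by (intro matrix_eq_on_zeta) (simp add: B4_def qnorm_less_1_iff)
qed

lemma Spin4_subset_SU11H: "Spin4 \<subseteq> SU11H"
  by (auto simp: Spin4_def qnorm_eq_1_iff diag_in_SU11H)

lemma Spin4_iff_fixes_e5:
  assumes A: "A \<in> SU11H"
  shows "A \<in> Spin4 \<longleftrightarrow> eta_matrix A *v e5 = e5"
proof -
  have "eta_matrix A *v e5 = zeta (moebius A 0)"
    using eta_matrix_zeta[OF A, of 0] by (simp add: zeta_0)
  also have "\<dots> = e5 \<longleftrightarrow> moebius A 0 = 0"
    using zeta_inv_zeta[OF moebius_in_ball[OF A, of 0]] zeta_0 zeta_inv_zeta[of 0] by force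
  also have "\<dots> \<longleftrightarrow> A \<in> Spin4"
  proof -
    obtain a b c d where A_eq: "A = qmat a b c d" and s: "su11 a b c d"
      using A by (rule SU11H_cases)
    have "moebius A 0 = 0 \<longleftrightarrow> b = 0"
      using su11_nonzero(2)[OF s] by (simp add: A_eq moebius_qmat)
    also have "\<dots> \<longleftrightarrow> A \<in> Spin4"
      using s su11_upper_triangular[of a c d]
      by (auto simp: A_eq Spin4_def qmat_eq_iff qnorm_eq_1_iff)
    finally show ?thesis .
  qed
  finally show ?thesis ..
qed

section \<open>Stabilisers in a discrete torsion-free group\<close>

lemma is_subgroup_matD:
  assumes "is_subgroup_mat G"
  shows "mat 1 \<in> G" "a \<in> G \<Longrightarrow> b \<in> G \<Longrightarrow> a ** b \<in> G" "a \<in> G \<Longrightarrow> matrix_inv a \<in> G"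
    "a \<in> G \<Longrightarrow> a ** matrix_inv a = mat 1" "a \<in> G \<Longrightarrow> matrix_inv a ** a = mat 1"
proof -
  have "invertible a" if "a \<in> G" for a
    using assms that by (simp add: is_subgroup_mat_def)
  then show "a \<in> G \<Longrightarrow> a ** matrix_inv a = mat 1" "a \<in> G \<Longrightarrow> matrix_inv a ** a = mat 1"
    by (simp_all add: matrix_inv_right_left)
qed (use assms in \<open>simp_all add: is_subgroup_mat_def\<close>)

lemma discrete_subgroup_recurrent_finite_order:
  assumes G: "is_subgroup_mat G" "discrete_set G" and k: "k \<in> G"
    and d: "\<And>n. d n > 0" and lim: "(\<lambda>n. matpow k (d n)) \<longlonglongrightarrow> mat 1"
  obtains n where "n > 0" "matpow k n = mat 1"
proof -
  have pow_G: "matpow k n \<in> G" for n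
    by (induction n) (simp_all add: matpow_Suc is_subgroup_matD[OF G(1)] k)
  obtain e where e: "e > 0" "\<And>b. b \<in> G \<Longrightarrow> b \<noteq> mat 1 \<Longrightarrow> e \<le> dist (mat 1) b"
    using G(2) is_subgroup_matD(1)[OF G(1)] unfolding discrete_set_def by blast
  obtain n where "dist (matpow k (d n)) (mat 1) < e"
    using lim e(1) unfolding LIMSEQ_def by blast
  then have "matpow k (d n) = mat 1"
    using e(2)[OF pow_G] by (force simp: dist_commute)
  with d show ?thesis
    by (rule that)
qed

lemma Qform_congruence_entry:
  "(transpose M ** Qform ** M) $ a $ b =
     M$1$a * M$1$b + M$2$a * M$2$b + M$3$a * M$3$b + M$4$a * M$4$b - M$5$a * M$5$b"
proof -
  have "Qform ** M = (\<chi> i j. if i = 5 then - M$i$j else M$i$j)"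
    by (simp add: vec_eq_iff forall_5 matrix_matrix_mult_def Qform_def sum_5)
  then show ?thesis
    unfolding matrix_mul_assoc[symmetric] by (simp add: matrix_matrix_mult_def sum_5 transpose_def)
qed

text \<open>The stabiliser of e5 in O(4,1) is O(4), whose entries are bounded by 1.\<close>
lemma lorentz_stabilizer_entries_le_1:
  fixes M :: "real^5^5"
  assumes lorentz: "transpose M ** Qform ** M = Qform" and e5_fixed: "M *v e5 = e5"
  shows "\<bar>M$i$j\<bar> \<le> 1"
proof -
  have col5: "M$k$5 = (if k = 5 then 1 else 0)" for k
    using arg_cong[OF e5_fixed, of "\<lambda>v. v$k"] unfolding e5_def matrix_vector_mult_axis_nth
    by (simp add: axis_def)
  show ?thesis
  proof (cases "j = 5")
    case False
    have "(transpose M ** Qform ** M) $ j $ 5 = 0" "(transpose M ** Qform ** M) $ j $ j = 1"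
      using lorentz False by (simp_all add: Qform_def)
    then have "M$5$j = 0" and sum: "(M$1$j)\<^sup>2 + (M$2$j)\<^sup>2 + (M$3$j)\<^sup>2 + (M$4$j)\<^sup>2 = 1"
      unfolding Qform_congruence_entry col5 by (simp_all add: power2_eq_square)
    moreover have "(M$1$j)\<^sup>2 \<le> 1 \<and> (M$2$j)\<^sup>2 \<le> 1 \<and> (M$3$j)\<^sup>2 \<le> 1 \<and> (M$4$j)\<^sup>2 \<le> 1"
      using sum zero_le_power2[of "M$1$j"] zero_le_power2[of "M$2$j"]
        zero_le_power2[of "M$3$j"] zero_le_power2[of "M$4$j"] by linarith
    ultimately have "(M$i$j)\<^sup>2 \<le> 1"
      using exhaust_5[of i] by auto
    then show ?thesis
      by (simp add: abs_square_le_1)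
  qed (simp add: col5)
qed

lemma lorentz_mult:
  "transpose A ** Qform ** A = Qform \<Longrightarrow> transpose B ** Qform ** B = Qform \<Longrightarrow>
     transpose (A ** B) ** Qform ** (A ** B) = Qform"
  by (simp add: matrix_transpose_mul matrix_mul_assoc) (metis matrix_mul_assoc)

lemma SO41p_matrix_inv:
  assumes "g \<in> SO41p"
  shows "g ** matrix_inv g = mat 1" "matrix_inv g ** g = mat 1"
    "transpose (matrix_inv g) ** Qform ** matrix_inv g = Qform"
proof -
  have "invertible g"
    using assms by (simp add: SO41p_def invertible_det_nz)
  then show inv: "g ** matrix_inv g = mat 1" "matrix_inv g ** g = mat 1"
    by (simp_all add: matrix_inv_right_left)
  have "transpose (matrix_inv g) ** (transpose g ** Qform ** g) ** matrix_inv g =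
      transpose (g ** matrix_inv g) ** Qform ** (g ** matrix_inv g)"
    by (simp add: matrix_transpose_mul matrix_mul_assoc)
  then show "transpose (matrix_inv g) ** Qform ** matrix_inv g = Qform"
    using assms inv by (simp add: SO41p_def)
qed

lemma lorentz_stabilizer_bounded_powers:
  assumes N: "transpose N ** Qform ** N = Qform" "N *v e5 = e5"
  shows "bounded (range (matpow N))"
proof -
  have "transpose (matpow N n) ** Qform ** matpow N n = Qform \<and> matpow N n *v e5 = e5" for n
    by (induction n) (simp_all add: matpow_Suc lorentz_mult N matrix_vector_mul_assoc[symmetric])
  then show ?thesis
    by (auto intro!: bounded_of_entries_le lorentz_stabilizer_entries_le_1)
qed

lemma SO41p_conj_stabilizer:
  assumes g: "g \<in> SO41p" and k: "k \<in> SO41p" "k *v (g *v e5) = g *v e5"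
  shows "transpose (matrix_inv g ** k ** g) ** Qform ** (matrix_inv g ** k ** g) = Qform"
    "(matrix_inv g ** k ** g) *v e5 = e5"
proof -
  note g_inv = SO41p_matrix_inv[OF g]
  show "transpose (matrix_inv g ** k ** g) ** Qform ** (matrix_inv g ** k ** g) = Qform"
    using k(1) g g_inv(3) by (simp add: lorentz_mult SO41p_def)
  have "(matrix_inv g ** k ** g) *v e5 = matrix_inv g *v (k *v (g *v e5))"
    by (simp add: matrix_vector_mul_assoc matrix_mul_assoc)
  also have "\<dots> = (matrix_inv g ** g) *v e5"
    unfolding k(2) by (simp add: matrix_vector_mul_assoc)
  finally show "(matrix_inv g ** k ** g) *v e5 = e5"
    by (simp add: g_inv(2))
qed

text \<open>Stabilisers of points of H^4 in SO+(4,1) are compact and the lattice is discrete,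
  so the stabiliser in the lattice is finite, hence trivial since the lattice is torsion free.\<close>
lemma lattice_stabilizer_trivial:
  assumes G: "G \<subseteq> SO41p" "is_subgroup_mat G" "discrete_set G" "torsion_free G"
    and g: "g \<in> SO41p" and k: "k \<in> G" "k *v (g *v e5) = g *v e5"
  shows "k = mat 1"
proof -
  define k' where "k' = matrix_inv k"
  have k': "k' \<in> G" "k ** k' = mat 1" "k' ** k = mat 1"
    using is_subgroup_matD[OF G(2)] k(1) by (simp_all add: k'_def)
  have "k' *v (g *v e5) = k' *v (k *v (g *v e5))"
    using k(2) by simp
  then have k'_fix: "k' *v (g *v e5) = g *v e5"
    by (simp add: matrix_vector_mul_assoc matrix_mul_assoc k'(3))
  define N where "N = matrix_inv g ** k ** g"
  define N' where "N' = matrix_inv g ** k' ** g"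
  note g_inv = SO41p_matrix_inv[OF g]
  have "N ** N' = matrix_inv g ** (k ** (g ** matrix_inv g) ** k') ** g"
    by (simp add: N_def N'_def matrix_mul_assoc)
  then have NN': "N ** N' = mat 1"
    using k'(2) g_inv by simp
  have "bounded (range (matpow N))" "bounded (range (matpow N'))"
    using SO41p_conj_stabilizer[OF g] G(1) k k' k'_fix
    by (auto simp: N_def N'_def intro!: lorentz_stabilizer_bounded_powers)
  then obtain d where d: "\<And>n. d n > 0" and "(\<lambda>n. matpow N (d n)) \<longlonglongrightarrow> mat 1"
    using matpow_returns_to_one[OF NN'] by blast
  then have "(\<lambda>n. g ** matpow N (d n) ** matrix_inv g) \<longlonglongrightarrow> g ** mat 1 ** matrix_inv g"
    by (intro tendsto_intros)
  moreover have "g ** matpow N m ** matrix_inv g = matpow k m" for m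
  proof -
    have "g ** matpow N m ** matrix_inv g =
        (g ** matrix_inv g) ** matpow k m ** (g ** matrix_inv g)"
      using matpow_conj[OF g_inv(2,1), of k m] by (simp add: N_def matrix_mul_assoc)
    then show ?thesis
      using g_inv(1) by simp
  qed
  ultimately have "(\<lambda>n. matpow k (d n)) \<longlonglongrightarrow> mat 1"
    using g_inv(1) by simp
  with G(2,3) k(1) d obtain n where "n > 0" "matpow k n = mat 1"
    by (rule discrete_subgroup_recurrent_finite_order)
  then show ?thesis
    using G(4) k(1) by (auto simp: torsion_free_def matpow_def)
qed

lemma the_lattice_element:
  assumes G: "G \<subseteq> SO41p" "is_subgroup_mat G" "discrete_set G" "torsion_free G"
    and g: "g \<in> SO41p" and c: "c \<in> G" "c *v (f *v (g *v e5)) = g *v e5"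
  shows "(THE c'. c' \<in> G \<and> c' *v (f *v (g *v e5)) = g *v e5) = c"
proof (rule the_equality)
  fix c'
  assume c': "c' \<in> G \<and> c' *v (f *v (g *v e5)) = g *v e5"
  define ci where "ci = matrix_inv c"
  have ci: "ci \<in> G" "ci ** c = mat 1"
    using is_subgroup_matD[OF G(2)] c(1) by (simp_all add: ci_def)
  have "ci *v (g *v e5) = ci *v (c *v (f *v (g *v e5)))"
    using c(2) by simp
  also have "\<dots> = f *v (g *v e5)"
    by (simp add: matrix_vector_mul_assoc matrix_mul_assoc ci(2))
  finally have "(c' ** ci) *v (g *v e5) = g *v e5"
    using c' by (simp add: matrix_vector_mul_assoc[symmetric])
  moreover have "c' ** ci \<in> G"
    using is_subgroup_matD(2)[OF G(2)] c' ci(1) by simp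
  ultimately have "c' ** ci = mat 1"
    using lattice_stabilizer_trivial[OF G g] by blast
  then have "c' ** ci ** c = c"
    by simp
  then show "c' = c"
    by (simp add: ci(2) matrix_mul_assoc[symmetric])
qed (use c in simp)

lemma rcoset_q_mult_left:
  assumes H: "is_subgroup_mat H" and h: "h \<in> H"
  shows "rcoset_q H (h ** X) = rcoset_q H X"
proof -
  note mult = is_subgroup_matD(2)[OF H]
  have h_inv: "matrix_inv h \<in> H" "matrix_inv h ** h = mat 1"
    using is_subgroup_matD[OF H] h by simp_all
  show ?thesis
    unfolding rcoset_q_def
  proof (intro subset_antisym image_subsetI)
    fix a
    assume "a \<in> H"
    then show "a ** (h ** X) \<in> (\<lambda>a. a ** X) ` H"
      using mult h by (auto simp: matrix_mul_assoc intro!: image_eqI[of _ _ "a ** h"])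
    have "(a ** matrix_inv h) ** (h ** X) = a ** (matrix_inv h ** h) ** X"
      by (simp add: matrix_mul_assoc)
    then have "a ** X = (a ** matrix_inv h) ** (h ** X)"
      using h_inv(2) by simp
    then show "a ** X \<in> (\<lambda>a. a ** (h ** X)) ` H"
      using mult h_inv(1) \<open>a \<in> H\<close> by blast
  qed
qed

text \<open>Two such cosets differ by a lattice element fixing the point hat g e5.\<close>
lemma Spin4_coset_unique:
  assumes G: "G \<subseteq> SO41p" "is_subgroup_mat G" "discrete_set G" "torsion_free G"
    and Gh: "Gh \<subseteq> SU11H" "is_subgroup_mat Gh" "bij_betw eta Gh G"
    and gh: "gh \<in> SU11H" and s: "s \<in> Spin4" "s' \<in> Spin4"
    and cosets: "rcoset_q Gh (gh ** s) = rcoset_q Gh (gh ** s')"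
  shows "s = s'"
proof -
  have s_SU: "s \<in> SU11H" "s' \<in> SU11H"
    using s Spin4_subset_SU11H by auto
  have "gh ** s \<in> rcoset_q Gh (gh ** s)"
    using is_subgroup_matD(1)[OF Gh(2)] by (auto simp: rcoset_q_def intro!: image_eqI[of _ _ "mat 1"])
  then obtain h where h: "h \<in> Gh" "gh ** s = h ** (gh ** s')"
    unfolding cosets by (auto simp: rcoset_q_def)
  have h_SU: "h \<in> SU11H"
    using h(1) Gh(1) by auto
  have "eta_matrix h *v (eta_matrix gh *v e5) = eta_matrix (h ** (gh ** s')) *v e5"
    using s_SU(2) Spin4_iff_fixes_e5[OF s_SU(2)] s(2) h_SU gh
    by (simp add: eta_matrix_mult SU11H_mult matrix_vector_mul_assoc[symmetric])
  also have "\<dots> = eta_matrix gh *v e5"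
    using s_SU(1) Spin4_iff_fixes_e5[OF s_SU(1)] s(1) gh
    by (simp add: h(2)[symmetric] eta_matrix_mult matrix_vector_mul_assoc[symmetric])
  finally have "eta_matrix h *v (eta_matrix gh *v e5) = eta_matrix gh *v e5" .
  moreover have "eta_matrix h \<in> G"
    using Gh(3) h(1) eta_eq_eta_matrix[OF h_SU] by (metis bij_betw_imp_surj_on imageI)
  ultimately have "eta h = eta (mat 1)"
    using lattice_stabilizer_trivial[OF G eta_matrix_in_SO41p[OF gh]] h_SU
    by (simp add: eta_eq_eta_matrix one_in_SU11H eta_matrix_one)
  then have "h = mat 1"
    using Gh(3) h(1) is_subgroup_matD(1)[OF Gh(2)] by (auto simp: bij_betw_def dest: inj_onD)
  then have "matrix_inv gh ** (gh ** s) = matrix_inv gh ** (gh ** s')"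
    using h(2) by simp
  then show ?thesis
    using matrix_inv_right_left(2)[OF SU11H_matrix_inv(1)[OF gh]] by (simp add: matrix_mul_assoc)
qed

section \<open>The differential of v \<mapsto> p v q^-1\<close>

lemma q2v_nth [simp]: "q2v a $ 1 = qre a" "q2v a $ 2 = qi a" "q2v a $ 3 = qj a" "q2v a $ 4 = qk a"
  by (simp_all add: q2v_def)

lemma v2q_components [simp]:
  "qre (v2q v) = v$1" "qi (v2q v) = v$2" "qj (v2q v) = v$3" "qk (v2q v) = v$4"
  by (simp_all add: v2q_def)

lemma v2q_q2v [simp]: "v2q (q2v a) = a"
  by (simp add: quat_eq_iff)

lemma q2v_v2q [simp]: "q2v (v2q v) = v"
  by (simp add: vec_eq_iff forall_4)

lemma qnorm2_v2q: "qnorm2 (v2q v) = (norm v)\<^sup>2"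
  unfolding power2_norm_eq_inner by (simp add: inner_vec_def sum_4 qnorm2_def power2_eq_square)

definition quat_lmult_matrix :: "quat \<Rightarrow> real^4^4" where
  "quat_lmult_matrix a = matrix (\<lambda>v. q2v (a * v2q v))"

definition quat_rmult_matrix :: "quat \<Rightarrow> real^4^4" where
  "quat_rmult_matrix b = matrix (\<lambda>v. q2v (v2q v * b))"

lemma quat_lmult_matrix_mult_vec: "quat_lmult_matrix a *v v = q2v (a * v2q v)"
proof -
  have "linear (\<lambda>v. q2v (a * v2q v))"
    by (rule linearI) (simp_all add: vec_eq_iff forall_4 algebra_simps)
  then show ?thesis
    by (simp add: quat_lmult_matrix_def matrix_works)
qed

lemma quat_rmult_matrix_mult_vec: "quat_rmult_matrix b *v v = q2v (v2q v * b)"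
proof -
  have "linear (\<lambda>v. q2v (v2q v * b))"
    by (rule linearI) (simp_all add: vec_eq_iff forall_4 algebra_simps)
  then show ?thesis
    by (simp add: quat_rmult_matrix_def matrix_works)
qed

lemma quat_lmult_matrix_mult: "quat_lmult_matrix a ** quat_lmult_matrix b = quat_lmult_matrix (a * b)"
  by (simp add: matrix_eq matrix_vector_mul_assoc[symmetric] quat_lmult_matrix_mult_vec mult.assoc)

lemma quat_lmult_matrix_1: "quat_lmult_matrix 1 = mat 1"
  by (simp add: matrix_eq quat_lmult_matrix_mult_vec)

lemma det_quat_lmult_matrix: "det (quat_lmult_matrix a) = (qnorm2 a)\<^sup>2"
  unfolding det_4
  by (simp add: quat_lmult_matrix_def matrix_def axis_def v2q_def qnorm2_def power2_eq_square
      algebra_simps)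

lemma det_quat_lmult_minus_rmult:
  "det (quat_lmult_matrix a - quat_rmult_matrix b) =
     ((qre a - qre b)\<^sup>2 + ((qi a)\<^sup>2 + (qj a)\<^sup>2 + (qk a)\<^sup>2) + ((qi b)\<^sup>2 + (qj b)\<^sup>2 + (qk b)\<^sup>2))\<^sup>2
     - 4 * ((qi a)\<^sup>2 + (qj a)\<^sup>2 + (qk a)\<^sup>2) * ((qi b)\<^sup>2 + (qj b)\<^sup>2 + (qk b)\<^sup>2)"
  unfolding det_4
  by (simp add: quat_lmult_matrix_def quat_rmult_matrix_def matrix_def axis_def v2q_def
      power2_eq_square algebra_simps)

lemma det_one_minus_unit_conj:
  assumes p: "qnorm2 p = 1" and q: "qnorm2 q = 1"
  shows "det (mat 1 - quat_lmult_matrix p ** quat_rmult_matrix (qcnj q)) = 4 * (qre p - qre q)\<^sup>2"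
proof -
  have "quat_lmult_matrix p ** quat_lmult_matrix (qcnj p) = mat 1"
    using p by (simp add: quat_lmult_matrix_mult mult_qcnj quat_lmult_matrix_1)
  then have "mat 1 - quat_lmult_matrix p ** quat_rmult_matrix (qcnj q) =
      quat_lmult_matrix p ** (quat_lmult_matrix (qcnj p) - quat_rmult_matrix (qcnj q))"
    by (simp add: matrix_diff_ldistrib)
  then have "det (mat 1 - quat_lmult_matrix p ** quat_rmult_matrix (qcnj q)) =
      det (quat_lmult_matrix (qcnj p) - quat_rmult_matrix (qcnj q))"
    using p by (simp add: det_mul det_quat_lmult_matrix)
  also have "\<dots> = ((qre p - qre q)\<^sup>2 + (1 - (qre p)\<^sup>2) + (1 - (qre q)\<^sup>2))\<^sup>2
      - 4 * (1 - (qre p)\<^sup>2) * (1 - (qre q)\<^sup>2)"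
  proof -
    have "(qi p)\<^sup>2 + (qj p)\<^sup>2 + (qk p)\<^sup>2 = 1 - (qre p)\<^sup>2"
      "(qi q)\<^sup>2 + (qj q)\<^sup>2 + (qk q)\<^sup>2 = 1 - (qre q)\<^sup>2"
      using p q by (simp_all add: qnorm2_def)
    then show ?thesis
      unfolding det_quat_lmult_minus_rmult by simp
  qed
  also have "\<dots> = 4 * (qre p - qre q)\<^sup>2"
    by (simp add: power2_eq_square algebra_simps)
  finally show ?thesis .
qed

lemma frechet_derivative_unit_conj:
  assumes F: "\<And>v. norm v < 1 \<Longrightarrow> F v = q2v (p * v2q v * inverse q)" and q: "qnorm2 q = 1"
  shows "frechet_derivative F (at 0) =
           (\<lambda>v. (quat_lmult_matrix p ** quat_rmult_matrix (qcnj q)) *v v)"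
proof -
  define L where "L v = (quat_lmult_matrix p ** quat_rmult_matrix (qcnj q)) *v v" for v :: "real^4"
  have L: "L v = q2v (p * v2q v * inverse q)" for v
    by (simp add: L_def matrix_vector_mul_assoc[symmetric] quat_lmult_matrix_mult_vec
        quat_rmult_matrix_mult_vec unit_inverse_eq_qcnj[OF q] mult.assoc)
  have "(L has_derivative L) (at 0)"
    unfolding L_def by (rule bounded_linear_imp_has_derivative) simp
  then have "(F has_derivative L) (at 0)"
    by (rule has_derivative_transform_within_open[where s = "ball 0 1"]) (auto simp: F L)
  then show ?thesis
    unfolding L_def[abs_def] by (rule frechet_derivative_at[symmetric])
qed

section \<open>The local contribution\<close>

lemma lifted_conjugate_in_Spin4:
  assumes fh: "fh \<in> SU11H" "eta fh = f" and gh: "gh \<in> SU11H" "eta gh = g"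
    and ch: "ch \<in> SU11H" "eta ch = c" and fixed: "c *v (f *v (g *v e5)) = g *v e5"
  shows "eta_matrix (matrix_inv gh ** ch ** fh ** gh) = matrix_inv g ** c ** f ** g"
    "matrix_inv gh ** ch ** fh ** gh \<in> Spin4"
proof -
  have SU: "matrix_inv gh \<in> SU11H" "matrix_inv gh ** ch \<in> SU11H" "matrix_inv gh ** ch ** fh \<in> SU11H"
    using SU11H_matrix_inv(2)[OF gh(1)] by (simp_all add: SU11H_mult ch(1) fh(1))
  have lifts: "eta_matrix fh = f" "eta_matrix gh = g" "eta_matrix ch = c"
    using fh gh ch eta_eq_eta_matrix by auto
  show eta_conj: "eta_matrix (matrix_inv gh ** ch ** fh ** gh) = matrix_inv g ** c ** f ** g"
    using SU fh(1) gh(1) ch(1) SU11H_matrix_inv(2)[OF gh(1)]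
    by (simp add: eta_matrix_mult eta_matrix_matrix_inv lifts)
  have "(matrix_inv g ** c ** f ** g) *v e5 = matrix_inv g *v (c *v (f *v (g *v e5)))"
    by (simp add: matrix_vector_mul_assoc matrix_mul_assoc)
  also have "\<dots> = e5"
    using SO41p_matrix_inv(2)[OF eta_matrix_in_SO41p[OF gh(1)]]
    unfolding fixed by (simp add: lifts(2) matrix_vector_mul_assoc)
  finally show "matrix_inv gh ** ch ** fh ** gh \<in> Spin4"
    using SU gh(1) Spin4_iff_fixes_e5 eta_conj by (simp add: SU11H_mult)
qed

lemma the_spin_element:
  assumes G: "G \<subseteq> SO41p" "is_subgroup_mat G" "discrete_set G" "torsion_free G"
    and Gh: "Gh \<subseteq> SU11H" "is_subgroup_mat Gh" "bij_betw eta Gh G"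
    and gh: "gh \<in> SU11H" and ch: "ch \<in> Gh"
    and Spin4: "matrix_inv gh ** ch ** fh ** gh \<in> Spin4"
  shows "(THE s. s \<in> Spin4 \<and> rcoset_q Gh (fh ** gh) = rcoset_q Gh (gh ** s)) =
           matrix_inv gh ** ch ** fh ** gh"
proof -
  have "gh ** (matrix_inv gh ** ch ** fh ** gh) = ch ** (fh ** gh)"
    using matrix_inv_right_left(1)[OF SU11H_matrix_inv(1)[OF gh]] by (simp add: matrix_mul_assoc)
  then have "rcoset_q Gh (fh ** gh) = rcoset_q Gh (gh ** (matrix_inv gh ** ch ** fh ** gh))"
    using rcoset_q_mult_left[OF Gh(2) ch] by simp
  with Spin4 show ?thesis
    using Spin4_coset_unique[OF G Gh gh] by (intro the_equality) auto
qed

lemma abs_det_I_minus_dphi_eq: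
  assumes c: "(THE c'. c' \<in> G \<and> c' *v (f *v (g *v e5)) = g *v e5) = c"
    and conj: "matrix_inv g ** c ** f ** g = eta_matrix (qmat p 0 0 q)"
    and pq: "qnorm2 p = 1" "qnorm2 q = 1"
  shows "abs_det_I_minus_dphi G f g = 4 * (qre p - qre q)\<^sup>2"
proof -
  define F where "F v = q2v (zeta_inv (matrix_inv g *v (c *v (f *v (g *v zeta (v2q v))))))"
    for v :: "real^4"
  have "F v = q2v (p * v2q v * inverse q)" if "norm v < 1" for v
  proof -
    have y: "qnorm2 (v2q v) < 1"
      using that by (simp add: qnorm2_v2q power_less_one_iff)
    have "F v = q2v (zeta_inv (eta_matrix (qmat p 0 0 q) *v zeta (v2q v)))"
      by (simp add: F_def conj[symmetric] matrix_vector_mul_assoc matrix_mul_assoc)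
    also have "\<dots> = q2v (moebius (qmat p 0 0 q) (v2q v))"
      using diag_in_SU11H[OF pq] y
      by (simp add: eta_matrix_zeta zeta_inv_zeta moebius_in_ball)
    finally show ?thesis
      by (simp add: moebius_qmat)
  qed
  then have "(\<lambda>v. v - frechet_derivative F (at 0) v) =
      (\<lambda>v. (mat 1 - quat_lmult_matrix p ** quat_rmult_matrix (qcnj q)) *v v)"
    by (simp add: frechet_derivative_unit_conj pq(2) matrix_vector_mult_diff_rdistrib)
  then show ?thesis
    unfolding abs_det_I_minus_dphi_def Let_def c F_def[symmetric]
    by (simp add: matrix_of_matrix_vector_mul det_one_minus_unit_conj[OF pq])
qed

lemma trace_Psi1: "trace (Psi1 h) = complex_of_real (2 * qre h)"
  by (simp add: trace_def sum_2 Psi1_def Let_def complex_eq_iff)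

lemma nu_eq:
  assumes s: "(THE s. s \<in> Spin4 \<and> rcoset_q Gh (fh ** gh) = rcoset_q Gh (gh ** s)) = qmat p 0 0 q"
    and det: "abs_det_I_minus_dphi G f g = 4 * (qre p - qre q)\<^sup>2"
  shows "nu Gh G f fh g gh = complex_of_real (1 / (2 * (qre p - qre q)))"
proof -
  \<comment> \<open>This also covers the degenerate case Re p = Re q, where both sides are 0 by x / 0 = 0.\<close>
  have "(2 * d) / (4 * d\<^sup>2) = 1 / (2 * d)" for d :: real
    by (cases "d = 0") (simp_all add: power2_eq_square)
  from this[of "qre p - qre q"]
  have "(2 * qre p - 2 * qre q) / (4 * (qre p - qre q)\<^sup>2) = 1 / (2 * (qre p - qre q))"
    by (simp only: right_diff_distrib)
  then show ?thesis
    unfolding nu_def Let_def s det Delta_plus_def Delta_minus_def trace_Psi1 qmat_nth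
    by (simp only: of_real_diff[symmetric] of_real_divide[symmetric])
qed

theorem theorem7p3:
  fixes G :: "(real^5^5) set" and Gh :: "qmat set"
    and f g c :: "real^5^5" and fh gh ch :: qmat and x :: "real^5"
  assumes G_sub: "G \<subseteq> SO41p" and G_grp: "is_subgroup_mat G"
    and G_disc: "discrete_set G" and G_tf: "torsion_free G" and G_cc: "cocompact G"
    and Gh_sub: "Gh \<subseteq> SU11H" and Gh_grp: "is_subgroup_mat Gh"
    and Gh_iso: "bij_betw eta Gh G"
    and f_in: "f \<in> SO41p" and f_norm: "(\<lambda>a. f ** a ** matrix_inv f) ` G = G"
    and fh_in: "fh \<in> SU11H" and fh_lift: "eta fh = f"
    and fh_norm: "(\<lambda>a. fh ** a ** matrix_inv fh) ` Gh = Gh"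
    and x_in: "x \<in> H4" and P_iso: "isolated_fixed_point G f x"
    and g_in: "g \<in> SO41p" and g_x: "g *v e5 = x"
    and gh_in: "gh \<in> SU11H" and gh_lift: "eta gh = g"
    and c_in: "c \<in> G" and c_fix: "c *v (f *v x) = x"
    and ch_in: "ch \<in> Gh" and ch_lift: "eta ch = c"
  shows "\<exists>p q. qnorm p = 1 \<and> qnorm q = 1 \<and>
           matrix_inv gh ** ch ** fh ** gh = qmat p 0 0 q \<and>
           nu Gh G f fh g gh = complex_of_real (1 / (2 * (qre p - qre q)))"
proof -
  note G = G_sub G_grp G_disc G_tf and Gh = Gh_sub Gh_grp Gh_iso
  have c_fix': "c *v (f *v (g *v e5)) = g *v e5"
    using c_fix by (simp add: g_x)
  have ch_SU: "ch \<in> SU11H"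
    using ch_in Gh_sub by auto
  note conj = lifted_conjugate_in_Spin4[OF fh_in fh_lift gh_in gh_lift ch_SU ch_lift c_fix']
  then obtain p q where pq: "qnorm p = 1" "qnorm q = 1"
    and conj_eq: "matrix_inv gh ** ch ** fh ** gh = qmat p 0 0 q"
    by (auto simp: Spin4_def)
  have "abs_det_I_minus_dphi G f g = 4 * (qre p - qre q)\<^sup>2"
    using pq conj(1) the_lattice_element[OF G g_in c_in c_fix']
    by (intro abs_det_I_minus_dphi_eq) (simp_all add: conj_eq qnorm_eq_1_iff)
  moreover have "(THE s. s \<in> Spin4 \<and> rcoset_q Gh (fh ** gh) = rcoset_q Gh (gh ** s)) = qmat p 0 0 q"
    using the_spin_element[OF G Gh gh_in ch_in conj(2)] by (simp add: conj_eq)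
  ultimately show ?thesis
    using pq conj_eq nu_eq by blast
qed

end
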